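(* Concurrent (parallel) accesses to an MS-tree under the locking mechanism described in the context, using the modified deletion strategy described in the context, do not result in violations of streaming consistency.
   Context: Streaming graph: a growing sequence of labelled directed edges with strictly increasing timestamps; under a sliding window edges arrive and expire. For a timing-connected query with timing sequence $\epsilon_1,\dots,\epsilon_k$, the expansion list $L=\{L^1,\dots,L^k\}$ has item $L^i$ storing matches of $\{\epsilon_1,\dots,\epsilon_i\}$, each written in sequential form $\{\sigma_1,\dots,\sigma_i\}$ with $\sigma_j$ matching $\epsilon_j$. The match-store tree (MS-tree) is a trie over these sequential forms: a depth-$i$ node is a data edge matching $\epsilon_i$, the root-to-node path is a match in $L^i$; each node has child pointers and a parent pointer; nodes of equal depth form a doubly linked list. Reading $L^i$: enumerate depth-$i$ nodes via the linked list and backtrack to the root. Inserting a new match $\{\sigma_1,\dots,\sigma_i\}$ (from joining existing $\{\sigma_1,\dots,\sigma_{i-1}\}$ with $\sigma_i$): add $\sigma_i$ as child of node $\sigma_{i-1}$. Modified deletion strategy: when a data edge $\sigma$ matching $\epsilon_{d}$ expires, the deleting thread first "partially" removes each expired node (depth-$d$ nodes containing $\sigma$ and all their descendants), meaning it removes the node from its doubly linked list and disables the pointer from the node's parent to the node while keeping the node's pointer to its parent; after partially removing all expired nodes, it finally removes them completely from the tree. Concurrency: each edge insertion/deletion is a transaction executed by its own thread as a sequence of READ/INSERT/DELETE operations on items $L^j$ (locking $L^j$ means locking all nodes of depth $j$); a single main thread, processing transactions in timestamp order, appends each thread's lock requests (shared or exclusive) to the ends of FIFO wait-lists of the items and then launches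 it; a thread obtains a lock on an item only when its request is at the head of that item's wait-list and the lock is compatible (item free or both shared), holds at most one lock at a time, and releases it after finishing on that item, waking the next requester. Streaming consistency: at each time point the query answers equal those obtained by executing edge insertions/deletions serially in chronological timestamp order. *)

theory Defs
  imports Main
begin

text \<open>A timing-connected query with timing sequence eps_1..eps_k is represented by
  k (number of query edges), a predicate matches sigma i ("data edge sigma matches eps_i")
  and a predicate join_ok m sigma ("the sequential form m @ [sigma] is a match of
  eps_1..eps_i when m is a match of eps_1..eps_(i-1)").
  A stream is given as the chronologically ordered list of edge insertions/deletions.\<close>

datatype 'e txn = Ins 'e | Del 'e

definition L_init :: "nat \<Rightarrow> 'e list set" where
  "L_init = (\<lambda>i. if i = 0 then {[]} else {})"

fun ser_step :: "nat \<Rightarrow> ('e \<Rightarrow> nat \<Rightarrow> bool) \<Rightarrow> ('e list \<Rightarrow> 'e \<Rightarrow> bool)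
    \<Rightarrow> (nat \<Rightarrow> 'e list set) \<Rightarrow> 'e txn \<Rightarrow> (nat \<Rightarrow> 'e list set)" where
  "ser_step k matches join_ok L (Ins \<sigma>) =
     foldl (\<lambda>L' i. L'(i := L' i \<union> {m @ [\<sigma>] | m. m \<in> L' (i - 1) \<and> join_ok m \<sigma>}))
           L (filter (matches \<sigma>) [1..<Suc k])"
| "ser_step k matches join_ok L (Del \<sigma>) =
     (\<lambda>i. if i = 0 then L i else {m \<in> L i. \<sigma> \<notin> set m})"

definition ser_L :: "nat \<Rightarrow> ('e \<Rightarrow> nat \<Rightarrow> bool) \<Rightarrow> ('e list \<Rightarrow> 'e \<Rightarrow> bool)
    \<Rightarrow> 'e txn list \<Rightarrow> nat \<Rightarrow> (nat \<Rightarrow> 'e list set)" where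
  "ser_L k matches join_ok txs t = foldl (ser_step k matches join_ok) L_init (take t txs)"

text \<open>Node identifiers: the root, or a node created by transaction (thread) t at depth i
  under parent p. Identifiers are never reused. The doubly
  linked list of depth-i nodes is represented by the set lst i of its members.\<close>

datatype nid = Root | Nd nat nat nid

record 'e node =
  ned :: 'e
  npar :: nid

text \<open>Backtracking from a depth-j node to the root along parent pointers; None if a
  pointer leads to a node that no longer exists (memory was freed).\<close>

fun bt :: "nat \<Rightarrow> (nid \<Rightarrow> 'e node option) \<Rightarrow> nid \<Rightarrow> 'e list option" where
  "bt 0 T n = (if n = Root then Some [] else None)"
| "bt (Suc j) T n = (case T n of None \<Rightarrow> None
                    | Some nd \<Rightarrow> map_option (\<lambda>p. p @ [ned nd]) (bt j T (npar nd)))"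

datatype mode = Sh | Ex

datatype op = ORead nat | OInsert nat | ODelete nat | OFree

fun op_lock :: "op \<Rightarrow> (nat \<times> mode) option" where
  "op_lock (ORead j) = Some (j, Sh)"
| "op_lock (OInsert j) = Some (j, Ex)"
| "op_lock (ODelete j) = Some (j, Ex)"
| "op_lock OFree = None"

text \<open>Insertion of sigma: for each i with sigma matching eps_i (increasing i):
  READ L^(i-1) (skipped for i = 1, L^0 being the root), then INSERT L^i.\<close>
definition ins_ops :: "nat \<Rightarrow> ('e \<Rightarrow> nat \<Rightarrow> bool) \<Rightarrow> 'e \<Rightarrow> op list" where
  "ins_ops k matches \<sigma> =
     concat (map (\<lambda>i. (if i = 1 then [] else [ORead (i - 1)]) @ [OInsert i])
                 (filter (matches \<sigma>) [1..<Suc k]))"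

text \<open>Deletion of sigma: DELETE L^d, ..., L^k (partial removal), where d is the least level
  matched by sigma, then the final complete removal (OFree, no lock).\<close>
definition del_ops :: "nat \<Rightarrow> ('e \<Rightarrow> nat \<Rightarrow> bool) \<Rightarrow> 'e \<Rightarrow> op list" where
  "del_ops k matches \<sigma> =
     (if \<exists>d. 1 \<le> d \<and> d \<le> k \<and> matches \<sigma> d
      then map ODelete [(LEAST d. 1 \<le> d \<and> d \<le> k \<and> matches \<sigma> d)..<Suc k] @ [OFree]
      else [])"

fun txn_ops :: "nat \<Rightarrow> ('e \<Rightarrow> nat \<Rightarrow> bool) \<Rightarrow> 'e txn \<Rightarrow> op list" where
  "txn_ops k matches (Ins \<sigma>) = ins_ops k matches \<sigma>"
| "txn_ops k matches (Del \<sigma>) = del_ops k matches \<sigma>"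

fun txn_edge :: "'e txn \<Rightarrow> 'e" where
  "txn_edge (Ins \<sigma>) = \<sigma>"
| "txn_edge (Del \<sigma>) = \<sigma>"

record 'e thr =
  tedge :: 'e
  tops :: "op list"                      \<comment> \<open>remaining operations\<close>
  trd :: "(nid \<times> 'e list option) set"   \<comment> \<open>result of the last READ\<close>
  tE :: "nid set"                        \<comment> \<open>nodes partially removed so far\<close>
  tadd :: "'e list set"                  \<comment> \<open>answers (matches in L^k) added\<close>
  trem :: "'e list option set"           \<comment> \<open>answers removed from L^k\<close>

record 'e conf =
  tree :: "nid \<Rightarrow> 'e node option"
  lst :: "nat \<Rightarrow> nid set"
  wl :: "nat \<Rightarrow> (nat \<times> mode) list"      \<comment> \<open>FIFO wait-list of item L^j\<close>
  hold :: "nat \<Rightarrow> (nat \<times> mode) set"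
  nlaunch :: nat                         \<comment> \<open>main thread: next transaction to launch\<close>
  thr :: "nat \<Rightarrow> 'e thr option"

definition conf_init :: "'e conf" where
  "conf_init = \<lparr>tree = (\<lambda>_. None), lst = (\<lambda>_. {}), wl = (\<lambda>_. []), hold = (\<lambda>_. {}),
                nlaunch = 0, thr = (\<lambda>_. None)\<rparr>"

definition compat :: "mode \<Rightarrow> (nat \<times> mode) set \<Rightarrow> bool" where
  "compat m H \<longleftrightarrow> H = {} \<or> (m = Sh \<and> (\<forall>(t', m') \<in> H. m' = Sh))"

text \<open>Effect of thread t executing its next operation (atomically, while it holds the
  lock on the operation's item).\<close>
definition do_op :: "nat \<Rightarrow> ('e list \<Rightarrow> 'e \<Rightarrow> bool) \<Rightarrow> nat \<Rightarrow> 'e thr \<Rightarrow> 'e conf \<Rightarrow> 'e conf" where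
  "do_op k join_ok t s c =
    (case tops s of [] \<Rightarrow> c
     | op # rest \<Rightarrow>
       (let \<sigma> = tedge s in
        case op of
          ORead j \<Rightarrow>
            c\<lparr>thr := (thr c)(t \<mapsto> s\<lparr>tops := rest,
                 trd := {(n, bt j (tree c) n) | n. n \<in> lst c j}\<rparr>)\<rparr>
        | OInsert i \<Rightarrow>
            (let src = (if i = 1 then {(Root, Some [])} else trd s);
                 new = {(p, m). (p, Some m) \<in> src \<and> join_ok m \<sigma>}
             in c\<lparr>tree := (\<lambda>n. case n of
                              Nd t' i' p \<Rightarrow> (if t' = t \<and> i' = i \<and> (\<exists>m. (p, m) \<in> new)
                                             then Some \<lparr>ned = \<sigma>, npar = p\<rparr> else tree c n)
                            | Root \<Rightarrow> tree c n),
                  lst := (lst c)(i := lst c i \<union> {Nd t i p | p m. (p, m) \<in> new}),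
                  thr := (thr c)(t \<mapsto> s\<lparr>tops := rest,
                     tadd := tadd s \<union> (if i = k then {m @ [\<sigma>] | p m. (p, m) \<in> new} else {})\<rparr>)\<rparr>)
        | ODelete j \<Rightarrow>
            (let R = {n \<in> lst c j. case tree c n of None \<Rightarrow> False
                        | Some nd \<Rightarrow> ned nd = \<sigma> \<or> npar nd \<in> tE s}
             in c\<lparr>lst := (lst c)(j := lst c j - R),
                  thr := (thr c)(t \<mapsto> s\<lparr>tops := rest, tE := tE s \<union> R,
                     trem := trem s \<union> (if j = k then bt k (tree c) ` R else {})\<rparr>)\<rparr>)
        | OFree \<Rightarrow>
            c\<lparr>tree := (\<lambda>n. if n \<in> tE s then None else tree c n),
              thr := (thr c)(t \<mapsto> s\<lparr>tops := rest\<rparr>)\<rparr>))"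

definition init_thr :: "'e \<Rightarrow> op list \<Rightarrow> 'e thr" where
  "init_thr \<sigma> ops = \<lparr>tedge = \<sigma>, tops = ops, trd = {}, tE = {}, tadd = {}, trem = {}\<rparr>"

inductive cstep :: "nat \<Rightarrow> ('e \<Rightarrow> nat \<Rightarrow> bool) \<Rightarrow> ('e list \<Rightarrow> 'e \<Rightarrow> bool) \<Rightarrow> 'e txn list
                    \<Rightarrow> 'e conf \<Rightarrow> 'e conf \<Rightarrow> bool"
  for k matches join_ok txs where
  launch: "\<lbrakk> nlaunch c < length txs;
             ops = txn_ops k matches (txs ! nlaunch c);
             reqs = List.map_filter op_lock ops \<rbrakk> \<Longrightarrow>
           cstep k matches join_ok txs c
             (c\<lparr>nlaunch := Suc (nlaunch c),
                wl := (\<lambda>j. wl c j @ map (\<lambda>(j', m). (nlaunch c, m)) (filter (\<lambda>(j', m). j' = j) reqs)),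
                thr := (thr c)(nlaunch c \<mapsto> init_thr (txn_edge (txs ! nlaunch c)) ops)\<rparr>)"
| grant: "\<lbrakk> thr c t = Some s; tops s = op # rest; op_lock op = Some (j, m);
            wl c j = (t, m) # w; \<forall>j' m'. (t, m') \<notin> hold c j'; compat m (hold c j) \<rbrakk> \<Longrightarrow>
          cstep k matches join_ok txs c
            (c\<lparr>wl := (wl c)(j := w), hold := (hold c)(j := insert (t, m) (hold c j))\<rparr>)"
| exec: "\<lbrakk> thr c t = Some s; tops s = op # rest; op_lock op = Some (j, m);
           (t, m) \<in> hold c j \<rbrakk> \<Longrightarrow>
         cstep k matches join_ok txs c
           ((do_op k join_ok t s c)\<lparr>hold := (hold c)(j := hold c j - {(t, m)})\<rparr>)"
| free: "\<lbrakk> thr c t = Some s; tops s = OFree # rest \<rbrakk> \<Longrightarrow>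
         cstep k matches join_ok txs c (do_op k join_ok t s c)"

definition txn_done :: "'e conf \<Rightarrow> nat \<Rightarrow> bool" where
  "txn_done c i \<longleftrightarrow> (\<exists>s. thr c i = Some s \<and> tops s = [])"

definition conc_answers :: "'e conf \<Rightarrow> nat \<Rightarrow> 'e list option set" where
  "conc_answers c t =
     foldl (\<lambda>A i. case thr c i of None \<Rightarrow> A | Some s \<Rightarrow> (A - trem s) \<union> Some ` tadd s) {} [0..<t]"

definition streaming_consistent ::
  "nat \<Rightarrow> ('e \<Rightarrow> nat \<Rightarrow> bool) \<Rightarrow> ('e list \<Rightarrow> 'e \<Rightarrow> bool) \<Rightarrow> 'e txn list \<Rightarrow> 'e conf \<Rightarrow> bool" where
  "streaming_consistent k matches join_ok txs c \<longleftrightarrow>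
     (\<forall>t \<le> length txs. (\<forall>i < t. txn_done c i) \<longrightarrow>
        conc_answers c t = Some ` ser_L k matches join_ok txs t k)"

end

(* The concurrent execution is compared with a serial execution that works on node
   identifiers instead of sequential forms: the node Nd t i p is the depth-i node that
   transaction t attaches below p, and node_path maps the serial node sets onto the
   expansion list L.

   All lock requests of a transaction are appended to the wait-lists when it is launched,
   in timestamp order, so conflicting operations on an item are executed in timestamp
   order. Hence the linked list of depth-j nodes always equals the serial state of L^j
   after exactly those transactions that have already written L^j, and these form an
   initial segment of the timestamp order: a writer of L^j finds the serial state just
   before its own transaction, a reader the state including its own earlier insertion.

   The modified deletion strategy keeps the parent pointers of partially removed nodes and
   frees them only after all levels have been processed. A deletion frees an ancestor of a
   depth-j node only after it has passed L^j, so every node that a reader or writer of L^j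
   finds in the list still reaches the root through allocated nodes, and backtracking
   returns its serial path. Consequently each transaction adds and removes at L^k exactly
   the answers of the serial execution. *)

theory Submission
  imports Defs
begin

fun node_parent :: "nid \<Rightarrow> nid" where
  "node_parent (Nd t i p) = p" | "node_parent Root = Root"
fun node_depth :: "nid \<Rightarrow> nat" where
  "node_depth (Nd t i p) = i" | "node_depth Root = 0"
fun ancestors :: "nid \<Rightarrow> nid set" where
  "ancestors Root = {}" | "ancestors (Nd t i p) = insert (Nd t i p) (ancestors p)"

lemma set_map_filter: "set (List.map_filter f xs) = {y. \<exists>x \<in> set xs. f x = Some y}"
  by (induction xs) (auto split: option.splits)

lemma sorted_map_filter:
  "sorted_wrt R xs \<Longrightarrow> (\<And>x y z w. x \<in> set xs \<Longrightarrow> y \<in> set xs \<Longrightarrow> R x y \<Longrightarrow> f x = Some z \<Longrightarrow> f y = Some w \<Longrightarrow> Q z w)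
   \<Longrightarrow> sorted_wrt Q (List.map_filter f xs)"
proof (induction xs)
  case Nil then show ?case by simp
next
  case (Cons x xs)
  show ?case
  proof (cases "f x")
    case None
    have "sorted_wrt Q (List.map_filter f xs)"
      using Cons.prems by (intro Cons.IH) auto
    then show ?thesis using None by simp
  next
    case (Some z)
    have "sorted_wrt Q (List.map_filter f xs)"
      using Cons.prems by (intro Cons.IH) auto
    moreover have "\<forall>w \<in> set (List.map_filter f xs). Q z w"
    proof
      fix w assume "w \<in> set (List.map_filter f xs)"
      then obtain y where y: "y \<in> set xs" "f y = Some w" by (auto simp: set_map_filter)
      have "R x y" using Cons.prems(1) y(1) by simp
      then show "Q z w" using Cons.prems(2)[of x y z w] y Some by simp
    qed
    ultimately show ?thesis using Some by simp
  qed
qed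

(* Order of the requests in a wait-list: by timestamp, and within one transaction the
   INSERT of an item (exclusive) before the READ of the same item (shared). *)
fun precedes :: "nat \<times> mode \<Rightarrow> nat \<times> mode \<Rightarrow> bool" where
  "precedes (t, m) (t', m') = (t < t' \<or> (t = t' \<and> m = Ex \<and> m' = Sh))"

lemma precedes_irrefl: "\<not> precedes r r"
  by (cases r) auto

lemma drop_sorted_after:
  assumes "sorted_wrt (\<lambda>a b. f a < (f b :: nat)) xs" "a \<in> set (drop p xs)" "b \<in> set xs" "f a < f b"
  shows "b \<in> set (drop p xs)"
proof (rule ccontr)
  assume "b \<notin> set (drop p xs)"
  then have "b \<in> set (take p xs)" using assms(3) by (metis UnE append_take_drop_id set_append)
  moreover have "sorted_wrt (\<lambda>a b. f a < f b) (take p xs @ drop p xs)" using assms(1) by simp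
  ultimately have "f b < f a" using assms(2) unfolding sorted_wrt_append by blast
  then show False using assms(4) by simp
qed

lemma filter_remove_head: "distinct xs \<Longrightarrow> filter P xs = x # w \<Longrightarrow> filter (\<lambda>r. P r \<and> r \<noteq> x) xs = w"
proof (induction xs)
  case Nil then show ?case by simp
next
  case (Cons y ys)
  show ?case
  proof (cases "P y")
    case True
    then have "y = x" "w = filter P ys" using Cons.prems by auto
    moreover have "x \<notin> set ys" using Cons.prems(1) \<open>y = x\<close> by simp
    ultimately show ?thesis using True by (auto intro: filter_cong)
  next
    case False then show ?thesis using Cons by simp
  qed
qed

lemma precedes_asym: "precedes a b \<Longrightarrow> \<not> precedes b a"
  by (cases a; cases b) auto

section \<open>Operations of a transaction\<close>

locale ms_tree_system =
  fixes k :: nat and matches :: "'e \<Rightarrow> nat \<Rightarrow> bool" and join_ok :: "'e list \<Rightarrow> 'e \<Rightarrow> bool"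
    and txs :: "'e txn list"
begin

definition ops_of :: "nat \<Rightarrow> op list" where "ops_of t = txn_ops k matches (txs ! t)"
definition edge_of :: "nat \<Rightarrow> 'e" where "edge_of t = txn_edge (txs ! t)"
definition has_level :: "'e \<Rightarrow> bool" where "has_level \<sigma> \<longleftrightarrow> (\<exists>d. 1 \<le> d \<and> d \<le> k \<and> matches \<sigma> d)"
definition first_level :: "'e \<Rightarrow> nat" where "first_level \<sigma> = (LEAST d. 1 \<le> d \<and> d \<le> k \<and> matches \<sigma> d)"

lemma first_level_spec: "has_level \<sigma> \<Longrightarrow> 1 \<le> first_level \<sigma> \<and> first_level \<sigma> \<le> k \<and> matches \<sigma> (first_level \<sigma>)"
  unfolding has_level_def first_level_def by (rule LeastI_ex)

lemma first_level_le: "1 \<le> d \<Longrightarrow> d \<le> k \<Longrightarrow> matches \<sigma> d \<Longrightarrow> first_level \<sigma> \<le> d"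
  unfolding first_level_def by (rule Least_le) auto

lemma set_ins_ops: "set (ins_ops k matches \<sigma>) =
   (\<Union>i \<in> {i. matches \<sigma> i \<and> 1 \<le> i \<and> i \<le> k}. if i = 1 then {OInsert i} else {ORead (i-1), OInsert i})"
proof -
  have g: "\<And>i. set ((if i = 1 then [] else [ORead (i - 1)]) @ [OInsert i]) = (if i = 1 then {OInsert i} else {ORead (i-1), OInsert i})"
    by auto
  have f: "set (filter (matches \<sigma>) [1..<Suc k]) = {i. matches \<sigma> i \<and> 1 \<le> i \<and> i \<le> k}"
    by auto
  show ?thesis unfolding ins_ops_def set_concat set_map image_image g f by simp
qed

lemma mem_ins_ops:
  "OInsert i \<in> set (ins_ops k matches \<sigma>) \<longleftrightarrow> matches \<sigma> i \<and> 1 \<le> i \<and> i \<le> k"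
  "ORead l \<in> set (ins_ops k matches \<sigma>) \<longleftrightarrow> matches \<sigma> (Suc l) \<and> 1 \<le> l \<and> Suc l \<le> k"
  "ODelete j \<notin> set (ins_ops k matches \<sigma>)"
  "OFree \<notin> set (ins_ops k matches \<sigma>)"
  unfolding set_ins_ops by (force split: if_splits intro: UN_I[of "Suc l"])+

lemma mem_del_ops:
  "ODelete j \<in> set (del_ops k matches \<sigma>) \<longleftrightarrow> has_level \<sigma> \<and> first_level \<sigma> \<le> j \<and> j \<le> k"
  "OFree \<in> set (del_ops k matches \<sigma>) \<longleftrightarrow> has_level \<sigma>"
  "OInsert i \<notin> set (del_ops k matches \<sigma>)"
  "ORead l \<notin> set (del_ops k matches \<sigma>)"
  unfolding del_ops_def has_level_def[symmetric] first_level_def[symmetric]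
  by (auto simp: has_level_def)

(* Operations of a transaction occur in increasing rank: READ L^(i-1) right before
   INSERT L^i, and the final complete removal last. *)
fun op_rank :: "op \<Rightarrow> nat" where
  "op_rank (ORead l) = 2*l+1" | "op_rank (OInsert i) = 2*i" | "op_rank (ODelete j) = 2*j" | "op_rank OFree = 2*k+2"

lemma sorted_concat_blocks:
  assumes "sorted_wrt (<) ns" "\<forall>i\<in>set ns. 1 \<le> i"
  shows "sorted_wrt (\<lambda>a b. op_rank a < op_rank b)
     (concat (map (\<lambda>i. (if i = 1 then [] else [ORead (i - 1)]) @ [OInsert i]) ns))"
  using assms
proof (induction ns)
  case Nil then show ?case by simp
next
  case (Cons i ns)
  have blk: "\<forall>x\<in>set ((if i = 1 then [] else [ORead (i - 1)]) @ [OInsert i]). op_rank x \<le> 2*i"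
    using Cons.prems by auto
  have rest: "\<forall>y\<in>set (concat (map (\<lambda>i. (if i = 1 then [] else [ORead (i - 1)]) @ [OInsert i]) ns)). 2*i < op_rank y"
  proof
    fix y assume "y \<in> set (concat (map (\<lambda>i. (if i = 1 then [] else [ORead (i - 1)]) @ [OInsert i]) ns))"
    then obtain i' where "i' \<in> set ns" "y \<in> set ((if i' = 1 then [] else [ORead (i' - 1)]) @ [OInsert i'])" by auto
    moreover have "i < i'" using Cons.prems \<open>i' \<in> set ns\<close> by auto
    ultimately show "2*i < op_rank y" by (auto split: if_splits)
  qed
  have s1: "sorted_wrt (\<lambda>a b. op_rank a < op_rank b) ((if i = 1 then [] else [ORead (i - 1)]) @ [OInsert i])"
    using Cons.prems by auto
  show ?case using Cons s1 blk rest
    by (auto simp: sorted_wrt_append intro: le_less_trans)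
qed

lemma sorted_ins_ops: "sorted_wrt (\<lambda>a b. op_rank a < op_rank b) (ins_ops k matches \<sigma>)"
  unfolding ins_ops_def
  by (rule sorted_concat_blocks) (auto simp del: upt_Suc intro: sorted_wrt_filter sorted_wrt_upt)

lemma sorted_del_ops: "sorted_wrt (\<lambda>a b. op_rank a < op_rank b) (del_ops k matches \<sigma>)"
  unfolding del_ops_def
  by (auto simp: sorted_wrt_append sorted_wrt_map sorted_wrt_upt less_Suc_eq_le intro: sorted_wrt_mono_rel[of _ "(<)"])

lemma sorted_ops_of: "sorted_wrt (\<lambda>a b. op_rank a < op_rank b) (ops_of t)"
  unfolding ops_of_def by (cases "txs ! t") (auto simp: sorted_ins_ops sorted_del_ops)

lemma OInsert_in_opsD: "OInsert i \<in> set (ops_of t) \<Longrightarrow> txs ! t = Ins (edge_of t) \<and> matches (edge_of t) i \<and> 1 \<le> i \<and> i \<le> k"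
  by (cases "txs ! t") (auto simp: ops_of_def edge_of_def mem_ins_ops mem_del_ops)
lemma OInsert_in_ops_iff: "txs ! t = Ins \<sigma> \<Longrightarrow> OInsert i \<in> set (ops_of t) \<longleftrightarrow> matches \<sigma> i \<and> 1 \<le> i \<and> i \<le> k"
  by (auto simp: ops_of_def mem_ins_ops)
lemma ORead_in_ops_iff: "txs ! t = Ins \<sigma> \<Longrightarrow> ORead l \<in> set (ops_of t) \<longleftrightarrow> matches \<sigma> (Suc l) \<and> 1 \<le> l \<and> Suc l \<le> k"
  by (auto simp: ops_of_def mem_ins_ops)
lemma ODelete_in_opsD: "ODelete j \<in> set (ops_of t) \<Longrightarrow> txs ! t = Del (edge_of t) \<and> has_level (edge_of t) \<and> first_level (edge_of t) \<le> j \<and> j \<le> k"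
  by (cases "txs ! t") (auto simp: ops_of_def edge_of_def mem_ins_ops mem_del_ops)
lemma ODelete_in_ops_iff: "txs ! t = Del \<sigma> \<Longrightarrow> ODelete j \<in> set (ops_of t) \<longleftrightarrow> has_level \<sigma> \<and> first_level \<sigma> \<le> j \<and> j \<le> k"
  by (auto simp: ops_of_def mem_del_ops)
lemma OFree_in_opsD: "OFree \<in> set (ops_of t) \<Longrightarrow> txs ! t = Del (edge_of t) \<and> has_level (edge_of t)"
  by (cases "txs ! t") (auto simp: ops_of_def edge_of_def mem_ins_ops mem_del_ops)
lemma ORead_in_opsD: "ORead l \<in> set (ops_of t) \<Longrightarrow> txs ! t = Ins (edge_of t) \<and> matches (edge_of t) (Suc l) \<and> 1 \<le> l \<and> Suc l \<le> k"
  by (cases "txs ! t") (auto simp: ops_of_def edge_of_def mem_ins_ops mem_del_ops)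

section \<open>Serial execution on node identifiers\<close>

fun node_edge :: "nid \<Rightarrow> 'e" where "node_edge (Nd t i p) = edge_of t" | "node_edge Root = undefined"
fun node_path :: "nid \<Rightarrow> 'e list" where "node_path Root = []" | "node_path (Nd t i p) = node_path p @ [edge_of t]"

primrec ins_nodes :: "nat \<Rightarrow> (nat \<Rightarrow> nid set) \<Rightarrow> nat \<Rightarrow> nid set" where
  "ins_nodes t L 0 = L 0"
| "ins_nodes t L (Suc i) = L (Suc i) \<union> (if matches (edge_of t) (Suc i) \<and> Suc i \<le> k
      then {Nd t (Suc i) p | p. p \<in> ins_nodes t L i \<and> join_ok (node_path p) (edge_of t)} else {})"

(* Serial deletion of sigma, level by level as the DELETE operations proceed: at depth j
   the nodes carrying sigma and the children of nodes removed at smaller depths. *)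
definition del_step :: "'e \<Rightarrow> (nat \<Rightarrow> nid set) \<Rightarrow> nat \<Rightarrow> nid set \<Rightarrow> nid set" where
  "del_step \<sigma> L j E = (if has_level \<sigma> \<and> first_level \<sigma> \<le> j \<and> j \<le> k then {n \<in> L j. node_edge n = \<sigma> \<or> node_parent n \<in> E} else {})"
primrec del_upto :: "'e \<Rightarrow> (nat \<Rightarrow> nid set) \<Rightarrow> nat \<Rightarrow> nid set" where
  "del_upto \<sigma> L 0 = {}" | "del_upto \<sigma> L (Suc j) = del_upto \<sigma> L j \<union> del_step \<sigma> L (Suc j) (del_upto \<sigma> L j)"
definition del_at :: "'e \<Rightarrow> (nat \<Rightarrow> nid set) \<Rightarrow> nat \<Rightarrow> nid set" where
  "del_at \<sigma> L j = del_step \<sigma> L j (del_upto \<sigma> L (j - 1))"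

definition node_step :: "nat \<Rightarrow> (nat \<Rightarrow> nid set) \<Rightarrow> nat \<Rightarrow> nid set" where
  "node_step t L = (case txs ! t of Ins \<sigma> \<Rightarrow> ins_nodes t L | Del \<sigma> \<Rightarrow> (\<lambda>j. L j - del_at \<sigma> L j))"

primrec ser_nodes :: "nat \<Rightarrow> nat \<Rightarrow> nid set" where
  "ser_nodes 0 = (\<lambda>i. if i = 0 then {Root} else {})"
| "ser_nodes (Suc n) = (if n < length txs then node_step n (ser_nodes n) else ser_nodes n)"

definition new_parents :: "nat \<Rightarrow> nat \<Rightarrow> nid set" where
  "new_parents t i = {p \<in> ser_nodes (Suc t) (i - 1). join_ok (node_path p) (edge_of t)}"
definition removed_by :: "nat \<Rightarrow> nat \<Rightarrow> nid set" where "removed_by X j = del_at (edge_of X) (ser_nodes X) j"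
definition removed_upto :: "nat \<Rightarrow> nat \<Rightarrow> nid set" where "removed_upto X j = del_upto (edge_of X) (ser_nodes X) j"

lemma del_upto_Suc: "del_upto \<sigma> L (Suc j) = del_upto \<sigma> L j \<union> del_at \<sigma> L (Suc j)"
  by (simp add: del_at_def)

lemma del_at_0: "del_at \<sigma> L 0 = {}"
  using first_level_spec[of \<sigma>] by (auto simp: del_at_def del_step_def)

lemma del_at_subset: "del_at \<sigma> L j \<subseteq> L j"
  by (auto simp: del_at_def del_step_def)

lemma del_at_guard: "a \<in> del_at \<sigma> L j \<Longrightarrow> has_level \<sigma> \<and> first_level \<sigma> \<le> j \<and> j \<le> k"
  by (auto simp: del_at_def del_step_def split: if_splits)

lemma del_upto_iff: "a \<in> del_upto \<sigma> L j \<longleftrightarrow> (\<exists>l. 1 \<le> l \<and> l \<le> j \<and> a \<in> del_at \<sigma> L l)"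
proof (induction j)
  case 0 then show ?case by simp
next
  case (Suc j) show ?case
    unfolding del_upto_Suc Un_iff Suc.IH by (auto simp: le_Suc_eq)
qed

lemma ins_nodes_mono: "L i \<subseteq> ins_nodes t L i"
  by (cases i) auto

lemma ser_nodes_0: "ser_nodes n 0 = {Root}"
  by (induction n) (auto simp: node_step_def del_at_0 split: txn.splits)

lemma ser_nodes_Suc_Ins: "t < length txs \<Longrightarrow> txs ! t = Ins \<sigma> \<Longrightarrow> ser_nodes (Suc t) = ins_nodes t (ser_nodes t)"
  by (simp add: node_step_def)

lemma ser_nodes_Suc_Del: "t < length txs \<Longrightarrow> txs ! t = Del \<sigma> \<Longrightarrow> ser_nodes (Suc t) = (\<lambda>j. ser_nodes t j - removed_by t j)"
  by (simp add: node_step_def removed_by_def edge_of_def)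

lemma ser_nodes_Suc_beyond: "length txs \<le> t \<Longrightarrow> ser_nodes (Suc t) = ser_nodes t"
  by simp

lemma ser_nodes_nodeE:
  "a \<in> ser_nodes n i \<Longrightarrow> 1 \<le> i \<Longrightarrow> \<exists>t p. a = Nd t i p \<and> t < n \<and> t < length txs \<and> OInsert i \<in> set (ops_of t)
      \<and> p \<in> new_parents t i \<and> p \<in> ser_nodes n (i - 1)"
proof (induction n arbitrary: a i)
  case 0 then show ?case by simp
next
  case (Suc n)
  show ?case
  proof (cases "n < length txs")
    case False
    then show ?thesis using Suc by (fastforce simp: ser_nodes_Suc_beyond)
  next
    case True
    show ?thesis
    proof (cases "txs ! n")
      case (Ins \<sigma>)
      have LSn: "ser_nodes (Suc n) = ins_nodes n (ser_nodes n)" using ser_nodes_Suc_Ins[OF True Ins] .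
      obtain i' where i': "i = Suc i'" using Suc.prems by (cases i) auto
      have edge: "edge_of n = \<sigma>" using Ins by (simp add: edge_of_def)
      from Suc.prems(1) LSn i' consider (old) "a \<in> ser_nodes n i"
        | (new) p where "a = Nd n i p" "p \<in> ins_nodes n (ser_nodes n) i'" "join_ok (node_path p) \<sigma>" "matches \<sigma> i" "i \<le> k"
        by (auto simp: edge split: if_splits)
      then show ?thesis
      proof cases
        case old
        then obtain t p where tp: "a = Nd t i p" "t < n" "t < length txs" "OInsert i \<in> set (ops_of t)"
          "p \<in> new_parents t i" "p \<in> ser_nodes n (i - 1)" using Suc.IH Suc.prems by blast
        have "p \<in> ser_nodes (Suc n) (i - 1)" using tp(6) ins_nodes_mono[of "ser_nodes n" "i - 1" n] LSn by auto
        then show ?thesis using tp by auto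
      next
        case new
        have "OInsert i \<in> set (ops_of n)" using new Ins Suc.prems(2) by (simp add: OInsert_in_ops_iff)
        moreover have "p \<in> ser_nodes (Suc n) (i - 1)" using new LSn i' by simp
        ultimately show ?thesis using new True by (auto simp: new_parents_def edge)
      qed
    next
      case (Del \<sigma>)
      have LSn: "ser_nodes (Suc n) = (\<lambda>j. ser_nodes n j - removed_by n j)" using ser_nodes_Suc_Del[OF True Del] .
      have edge: "edge_of n = \<sigma>" using Del by (simp add: edge_of_def)
      from Suc.prems(1) LSn have a1: "a \<in> ser_nodes n i" "a \<notin> removed_by n i" by auto
      then obtain t p where tp: "a = Nd t i p" "t < n" "t < length txs" "OInsert i \<in> set (ops_of t)"
          "p \<in> new_parents t i" "p \<in> ser_nodes n (i - 1)" using Suc.IH Suc.prems by blast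
      have "p \<notin> removed_by n (i - 1)"
      proof
        assume pd: "p \<in> removed_by n (i - 1)"
        then have g: "has_level \<sigma> \<and> first_level \<sigma> \<le> i - 1 \<and> i - 1 \<le> k" using del_at_guard by (auto simp: removed_by_def edge)
        have ik: "i \<le> k" using OInsert_in_opsD[OF tp(4)] by simp
        have "i - 1 \<ge> 1" using pd by (cases "i - 1") (auto simp: removed_by_def del_at_0)
        then have "p \<in> del_upto \<sigma> (ser_nodes n) (i - 1)" using pd by (auto simp: del_upto_iff removed_by_def edge)
        then have "a \<in> removed_by n i" using g ik tp(1) a1(1) \<open>i - 1 \<ge> 1\<close>
          by (auto simp: removed_by_def del_at_def del_step_def edge)
        then show False using a1 by simp
      qed
      then show ?thesis using tp LSn by auto
    qed
  qed
qed

lemma ser_nodes_level_le: "a \<in> ser_nodes n i \<Longrightarrow> 1 \<le> i \<Longrightarrow> i \<le> k"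
  using ser_nodes_nodeE OInsert_in_opsD by blast

lemma ser_nodes_depth: "a \<in> ser_nodes n i \<Longrightarrow> node_depth a = i"
proof (cases "i = 0")
  case True then show "a \<in> ser_nodes n i \<Longrightarrow> node_depth a = i" by (simp add: ser_nodes_0)
next
  case False then show "a \<in> ser_nodes n i \<Longrightarrow> node_depth a = i" using ser_nodes_nodeE[of a n i] by auto
qed

lemma ser_nodes_new: "a \<in> ser_nodes (Suc m) i \<Longrightarrow> a \<notin> ser_nodes m i \<Longrightarrow> \<exists>p. a = Nd m i p"
proof -
  assume a: "a \<in> ser_nodes (Suc m) i" "a \<notin> ser_nodes m i"
  show ?thesis
  proof (cases "m < length txs")
    case False then show ?thesis using a by simp
  next
    case True
    show ?thesis
    proof (cases "txs ! m")
      case (Ins \<sigma>)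
      then have "ser_nodes (Suc m) i = ins_nodes m (ser_nodes m) i" using ser_nodes_Suc_Ins[OF True] by simp
      then show ?thesis using a by (cases i) (auto split: if_splits)
    next
      case (Del \<sigma>)
      then show ?thesis using a ser_nodes_Suc_Del[OF True Del] by simp
    qed
  qed
qed

lemma ser_nodes_removed_forever: assumes "Nd t i p \<notin> ser_nodes m i" "t < m" "m \<le> m'" shows "Nd t i p \<notin> ser_nodes m' i"
  using assms(3)
proof (induction m' rule: dec_induct)
  case base then show ?case using assms by simp
next
  case (step n)
  show ?case
  proof
    assume "Nd t i p \<in> ser_nodes (Suc n) i"
    then obtain q where "Nd t i p = Nd n i q" using ser_nodes_new step by blast
    then show False using step assms by simp
  qed
qed

lemma ancestors_in_ser_nodes: "x \<in> ser_nodes M l \<Longrightarrow> a \<in> ancestors x \<Longrightarrow> 1 \<le> node_depth a \<and> node_depth a \<le> l \<and> a \<in> ser_nodes M (node_depth a)"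
proof (induction x arbitrary: l)
  case Root then show ?case by simp
next
  case (Nd t i p)
  have li: "l = i" using ser_nodes_depth[OF Nd.prems(1)] by simp
  have l1: "1 \<le> l" using Nd.prems(1) by (cases l) (auto simp: ser_nodes_0)
  obtain t' p' where tp: "Nd t i p = Nd t' l p'" "p' \<in> ser_nodes M (l - 1)"
    using ser_nodes_nodeE[OF Nd.prems(1) l1] by blast
  show ?case
  proof (cases "a = Nd t i p")
    case True then show ?thesis using li l1 Nd.prems by simp
  next
    case False
    then have "a \<in> ancestors p" using Nd.prems by simp
    then show ?thesis using Nd.IH[of "l - 1"] tp by auto
  qed
qed

lemma del_at_depth: "a \<in> del_at \<sigma> (ser_nodes n) l \<Longrightarrow> node_depth a = l"
  using del_at_subset ser_nodes_depth by blast

lemma removed_upto_depth: "a \<in> removed_upto X j \<Longrightarrow> a \<in> removed_by X (node_depth a) \<and> 1 \<le> node_depth a \<and> node_depth a \<le> j"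
  unfolding removed_upto_def removed_by_def del_upto_iff using del_at_depth by blast

lemma edge_on_path_level: "a \<in> ser_nodes n i \<Longrightarrow> 1 \<le> i \<Longrightarrow> \<sigma> \<in> set (node_path a) \<Longrightarrow> has_level \<sigma> \<and> first_level \<sigma> \<le> i"
proof (induction i arbitrary: a)
  case 0 then show ?case by simp
next
  case (Suc i)
  obtain t p where tp: "a = Nd t (Suc i) p" "OInsert (Suc i) \<in> set (ops_of t)" "p \<in> ser_nodes n i"
    using ser_nodes_nodeE[OF Suc.prems(1)] by auto
  have m: "matches (edge_of t) (Suc i) \<and> Suc i \<le> k" using OInsert_in_opsD[OF tp(2)] by simp
  from Suc.prems(3) tp(1) have "\<sigma> = edge_of t \<or> \<sigma> \<in> set (node_path p)" by auto
  then show ?case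
  proof
    assume "\<sigma> = edge_of t"
    then show ?thesis using m first_level_le[of "Suc i" \<sigma>] by (auto simp: has_level_def)
  next
    assume h: "\<sigma> \<in> set (node_path p)"
    have "i \<noteq> 0"
    proof
      assume "i = 0"
      then have "p = Root" using tp(3) by (simp add: ser_nodes_0)
      then show False using h by simp
    qed
    then show ?thesis using Suc.IH[OF tp(3) _ h] by auto
  qed
qed

lemma del_at_iff: "a \<in> del_at \<sigma> (ser_nodes n) i \<longleftrightarrow> (1 \<le> i \<and> a \<in> ser_nodes n i \<and> \<sigma> \<in> set (node_path a))"
proof (induction i arbitrary: a)
  case 0 then show ?case by (simp add: del_at_0)
next
  case (Suc i)
  show ?case
  proof (cases "a \<in> ser_nodes n (Suc i)")
    case False then show ?thesis using del_at_subset by blast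
  next
    case True
    obtain t p where tp: "a = Nd t (Suc i) p" "p \<in> ser_nodes n i"
      using ser_nodes_nodeE[OF True] by auto
    have pe: "p \<in> del_upto \<sigma> (ser_nodes n) i \<longleftrightarrow> \<sigma> \<in> set (node_path p)"
    proof (cases "i = 0")
      case True then show ?thesis using tp(2) by (simp add: ser_nodes_0)
    next
      case False
      have "p \<in> del_upto \<sigma> (ser_nodes n) i \<longleftrightarrow> p \<in> del_at \<sigma> (ser_nodes n) i"
        unfolding del_upto_iff using False del_at_depth ser_nodes_depth[OF tp(2)] by (metis le_refl less_one not_less)
      then show ?thesis using Suc.IH[of p] tp(2) False by simp
    qed
    show ?thesis
    proof (cases "has_level \<sigma> \<and> first_level \<sigma> \<le> Suc i \<and> Suc i \<le> k")
      case g: True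
      have "a \<in> del_at \<sigma> (ser_nodes n) (Suc i) \<longleftrightarrow> node_edge a = \<sigma> \<or> node_parent a \<in> del_upto \<sigma> (ser_nodes n) i"
        using g True by (simp add: del_at_def del_step_def)
      then show ?thesis using pe tp True by auto
    next
      case g: False
      have "a \<notin> del_at \<sigma> (ser_nodes n) (Suc i)" using g del_at_guard by blast
      moreover have "\<sigma> \<notin> set (node_path a)"
        using g edge_on_path_level[OF True] ser_nodes_level_le[OF True] by auto
      ultimately show ?thesis by simp
    qed
  qed
qed

lemma removed_by_iff: "a \<in> removed_by X i \<longleftrightarrow> (1 \<le> i \<and> a \<in> ser_nodes X i \<and> edge_of X \<in> set (node_path a))"
  unfolding removed_by_def by (rule del_at_iff)

primrec ins_paths :: "'e \<Rightarrow> (nat \<Rightarrow> 'e list set) \<Rightarrow> nat \<Rightarrow> 'e list set" where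
  "ins_paths \<sigma> L 0 = L 0"
| "ins_paths \<sigma> L (Suc i) = L (Suc i) \<union> (if matches \<sigma> (Suc i) \<and> Suc i \<le> k
      then {m @ [\<sigma>] | m. m \<in> ins_paths \<sigma> L i \<and> join_ok m \<sigma>} else {})"

lemma foldl_ins_levels:
  assumes "m \<le> k"
  shows "foldl (\<lambda>L' i. L'(i := L' i \<union> {x @ [\<sigma>] | x. x \<in> L' (i - 1) \<and> join_ok x \<sigma>}))
           L (filter (matches \<sigma>) [1..<Suc m]) = (\<lambda>i. if i \<le> m then ins_paths \<sigma> L i else L i)"
  using assms
proof (induction m)
  case 0 show ?case
  proof
    fix i show "foldl (\<lambda>L' i. L'(i := L' i \<union> {x @ [\<sigma>] | x. x \<in> L' (i - 1) \<and> join_ok x \<sigma>}))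
           L (filter (matches \<sigma>) [1..<Suc 0]) i = (if i \<le> 0 then ins_paths \<sigma> L i else L i)"
      by (cases i) auto
  qed
next
  case (Suc m)
  define F :: "(nat \<Rightarrow> 'e list set) \<Rightarrow> nat \<Rightarrow> nat \<Rightarrow> 'e list set" where "F = (\<lambda>L' i. L'(i := L' i \<union> {x @ [\<sigma>] | x. x \<in> (L' (i - 1) :: 'e list set) \<and> join_ok x \<sigma>}))"
  define G where "G = (\<lambda>i. if i \<le> m then ins_paths \<sigma> L i else L i)"
  have IH: "foldl F L (filter (matches \<sigma>) [1..<Suc m]) = G"
    unfolding F_def G_def using Suc.prems by (intro Suc.IH) simp
  have e: "[1..<Suc (Suc m)] = [1..<Suc m] @ [Suc m]" by simp
  have "foldl F L (filter (matches \<sigma>) [1..<Suc (Suc m)]) = foldl F G (filter (matches \<sigma>) [Suc m])"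
    by (simp only: e filter_append foldl_append IH)
  also have "\<dots> = (\<lambda>i. if i \<le> Suc m then ins_paths \<sigma> L i else L i)"
  proof (cases "matches \<sigma> (Suc m)")
    case True
    have "foldl F G (filter (matches \<sigma>) [Suc m]) = F G (Suc m)" using True by simp
    also have "\<dots> = (\<lambda>i. if i \<le> Suc m then ins_paths \<sigma> L i else L i)"
    proof
      fix i show "F G (Suc m) i = (if i \<le> Suc m then ins_paths \<sigma> L i else L i)"
        using True Suc.prems by (auto simp: F_def G_def le_Suc_eq)
    qed
    finally show ?thesis .
  next
    case False
    have "foldl F G (filter (matches \<sigma>) [Suc m]) = G" using False by simp
    also have "\<dots> = (\<lambda>i. if i \<le> Suc m then ins_paths \<sigma> L i else L i)"
    proof
      fix i show "G i = (if i \<le> Suc m then ins_paths \<sigma> L i else L i)"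
        using False by (auto simp: G_def le_Suc_eq)
    qed
    finally show ?thesis .
  qed
  finally show ?case unfolding F_def .
qed

lemma ser_step_Ins: "ser_step k matches join_ok L (Ins \<sigma>) = ins_paths \<sigma> L"
proof -
  have "ser_step k matches join_ok L (Ins \<sigma>) = (\<lambda>i. if i \<le> k then ins_paths \<sigma> L i else L i)"
    using foldl_ins_levels[of k \<sigma> L] by simp
  also have "\<dots> = ins_paths \<sigma> L"
  proof
    fix i show "(if i \<le> k then ins_paths \<sigma> L i else L i) = ins_paths \<sigma> L i"
      by (cases i) auto
  qed
  finally show ?thesis .
qed

lemma node_path_image_new: "node_path ` {Nd t j p | p. p \<in> A \<and> join_ok (node_path p) \<sigma>'} = {m @ [edge_of t] | m. m \<in> node_path ` A \<and> join_ok m \<sigma>'}"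
  by (auto simp: image_def)

lemma ins_paths_ins_nodes: "ins_paths (edge_of t) (\<lambda>i. node_path ` L i) i = node_path ` ins_nodes t L i"
proof (induction i)
  case 0 then show ?case by simp
next
  case (Suc i) then show ?case by (simp add: image_Un node_path_image_new)
qed

lemma ser_L_eq_paths: "ser_L k matches join_ok txs n = (\<lambda>i. node_path ` ser_nodes n i)"
proof (induction n)
  case 0 show ?case
  proof
    fix i show "ser_L k matches join_ok txs 0 i = node_path ` ser_nodes 0 i"
      by (cases i) (auto simp: ser_L_def L_init_def)
  qed
next
  case (Suc n)
  show ?case
  proof (cases "n < length txs")
    case False
    then show ?thesis using Suc by (simp add: ser_L_def)
  next
    case True
    have "ser_L k matches join_ok txs (Suc n) = ser_step k matches join_ok (ser_L k matches join_ok txs n) (txs ! n)"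
      using True by (simp add: ser_L_def take_Suc_conv_app_nth)
    also have "\<dots> = (\<lambda>i. node_path ` ser_nodes (Suc n) i)"
    proof (cases "txs ! n")
      case (Ins \<sigma>)
      have edge: "edge_of n = \<sigma>" using Ins by (simp add: edge_of_def)
      have "ser_step k matches join_ok (ser_L k matches join_ok txs n) (txs ! n) = ins_paths \<sigma> (\<lambda>i. node_path ` ser_nodes n i)"
        by (simp only: Suc.IH Ins ser_step_Ins)
      also have "\<dots> = (\<lambda>i. node_path ` ins_nodes n (ser_nodes n) i)"
        using ins_paths_ins_nodes[of n "ser_nodes n"] edge by auto
      also have "\<dots> = (\<lambda>i. node_path ` ser_nodes (Suc n) i)" using ser_nodes_Suc_Ins[OF True Ins] by simp
      finally show ?thesis .
    next
      case (Del \<sigma>)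
      have edge: "edge_of n = \<sigma>" using Del by (simp add: edge_of_def)
      show ?thesis
      proof
        fix i
        show "ser_step k matches join_ok (ser_L k matches join_ok txs n) (txs ! n) i = node_path ` ser_nodes (Suc n) i"
        proof (cases "i = 0")
          case True then show ?thesis using Suc Del by (simp del: ser_nodes.simps add: ser_nodes_0)
        next
          case False
          then show ?thesis using Suc Del ser_nodes_Suc_Del[OF True Del] removed_by_iff[of _ n i] edge
            by auto
        qed
      qed
    qed
    finally show ?thesis .
  qed
qed

section \<open>The system invariant\<close>

definition op_done :: "'e conf \<Rightarrow> nat \<Rightarrow> op \<Rightarrow> bool" where
  "op_done c t oo \<longleftrightarrow> t < nlaunch c \<and> oo \<in> set (ops_of t) \<and> oo \<notin> set (tops (the (thr c t)))"
definition write_done :: "'e conf \<Rightarrow> nat \<Rightarrow> nat \<Rightarrow> bool" where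
  "write_done c t j \<longleftrightarrow> op_done c t (OInsert j) \<or> op_done c t (ODelete j)"
definition writes :: "nat \<Rightarrow> nat \<Rightarrow> bool" where
  "writes t j \<longleftrightarrow> t < length txs \<and> (OInsert j \<in> set (ops_of t) \<or> ODelete j \<in> set (ops_of t))"
definition request_op :: "nat \<Rightarrow> nat \<Rightarrow> mode \<Rightarrow> op" where
  "request_op t j m = (case m of Sh \<Rightarrow> ORead j | Ex \<Rightarrow> (case txs ! t of Ins _ \<Rightarrow> OInsert j | Del _ \<Rightarrow> ODelete j))"
definition requests_of :: "nat \<Rightarrow> nat \<Rightarrow> (nat \<times> mode) list" where
  "requests_of t j = map (\<lambda>(j', m). (t, m)) (filter (\<lambda>(j', m). j' = j) (List.map_filter op_lock (ops_of t)))"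
definition requests :: "nat \<Rightarrow> nat \<Rightarrow> (nat \<times> mode) list" where
  "requests j n = concat (map (\<lambda>t. requests_of t j) [0..<n])"
definition granted :: "'e conf \<Rightarrow> nat \<Rightarrow> nat \<times> mode \<Rightarrow> bool" where
  "granted c j r \<longleftrightarrow> op_done c (fst r) (request_op (fst r) j (snd r)) \<or> r \<in> hold c j"

lemma op_lock_eq_request_op: "oo \<in> set (ops_of t) \<Longrightarrow> (op_lock oo = Some (j, m)) = (oo = request_op t j m)"
proof (cases oo)
  case (ORead l)
  then show "oo \<in> set (ops_of t) \<Longrightarrow> ?thesis" by (cases m) (auto simp: request_op_def split: txn.splits)
next
  case (OInsert i)
  assume "oo \<in> set (ops_of t)"
  then have "txs ! t = Ins (edge_of t)" using OInsert OInsert_in_opsD by simp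
  then show ?thesis using OInsert by (cases m) (auto simp: request_op_def)
next
  case (ODelete i)
  assume "oo \<in> set (ops_of t)"
  then have "txs ! t = Del (edge_of t)" using ODelete ODelete_in_opsD by simp
  then show ?thesis using ODelete by (cases m) (auto simp: request_op_def)
next
  case OFree
  then show ?thesis by (cases m) (auto simp: request_op_def split: txn.splits)
qed

lemma op_lock_request_op: "request_op t j m \<in> set (ops_of t) \<Longrightarrow> op_lock (request_op t j m) = Some (j, m)"
  using op_lock_eq_request_op by blast

lemma request_op_ne_OFree: "request_op t j m \<noteq> OFree"
  by (auto simp: request_op_def split: mode.splits txn.splits)

lemma set_requests_of: "set (requests_of t j) = {(t, m) | m. request_op t j m \<in> set (ops_of t)}"
proof -
  have "set (requests_of t j) = {(t, m) | m. \<exists>oo \<in> set (ops_of t). op_lock oo = Some (j, m)}"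
    unfolding requests_of_def set_map set_filter set_map_filter by (auto simp: image_iff)
  also have "\<dots> = {(t, m) | m. request_op t j m \<in> set (ops_of t)}"
  proof -
    have "(\<exists>oo\<in>set (ops_of t). op_lock oo = Some (j, m)) \<longleftrightarrow> request_op t j m \<in> set (ops_of t)" for m
    proof
      assume "\<exists>oo\<in>set (ops_of t). op_lock oo = Some (j, m)"
      then obtain oo where "oo \<in> set (ops_of t)" "op_lock oo = Some (j, m)" by blast
      then show "request_op t j m \<in> set (ops_of t)" using op_lock_eq_request_op[of oo t j m] by simp
    next
      assume r: "request_op t j m \<in> set (ops_of t)"
      then have "op_lock (request_op t j m) = Some (j, m)" using op_lock_eq_request_op[of "request_op t j m" t j m] by simp
      then show "\<exists>oo\<in>set (ops_of t). op_lock oo = Some (j, m)" using r by blast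
    qed
    then show ?thesis by simp
  qed
  finally show ?thesis .
qed

lemma sorted_requests_of: "sorted_wrt precedes (requests_of t j)"
proof -
  have s1: "sorted_wrt (\<lambda>(j1, m1) (j2, m2). j1 = j2 \<longrightarrow> m1 = Ex \<and> m2 = Sh) (List.map_filter op_lock (ops_of t))"
  proof (rule sorted_map_filter[OF sorted_ops_of])
    fix x y z w
    assume "op_rank x < op_rank y" "op_lock x = Some z" "op_lock y = Some w"
    then show "(\<lambda>(j1, m1) (j2, m2). j1 = j2 \<longrightarrow> m1 = Ex \<and> m2 = Sh) z w"
      by (cases x; cases y) auto
  qed
  have s2: "sorted_wrt (\<lambda>(j1, m1) (j2, m2). j1 = j2 \<longrightarrow> m1 = Ex \<and> m2 = Sh)
     (filter (\<lambda>(j', m). j' = j) (List.map_filter op_lock (ops_of t)))"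
    by (rule sorted_wrt_filter[OF s1])
  have s3: "sorted_wrt (\<lambda>a b. precedes ((\<lambda>(j', m). (t, m)) a) ((\<lambda>(j', m). (t, m)) b))
     (filter (\<lambda>(j', m). j' = j) (List.map_filter op_lock (ops_of t)))"
    by (rule sorted_wrt_mono_rel[OF _ s2]) auto
  show ?thesis unfolding requests_of_def sorted_wrt_map using s3 .
qed

lemma set_requests: "set (requests j n) = {(t, m). t < n \<and> request_op t j m \<in> set (ops_of t)}"
  unfolding requests_def by (auto simp: set_requests_of)

lemma requests_Suc: "requests j (Suc n) = requests j n @ requests_of n j"
  by (simp add: requests_def)

lemma sorted_requests: "sorted_wrt precedes (requests j n)"
proof (induction n)
  case 0 then show ?case by (simp add: requests_def)
next
  case (Suc n)
  show ?case unfolding requests_Suc sorted_wrt_append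
    using Suc sorted_requests_of by (auto simp: set_requests set_requests_of)
qed

lemma sorted_precedes_distinct: "sorted_wrt precedes xs \<Longrightarrow> distinct xs"
  by (induction xs) (auto simp: precedes_irrefl)

lemma distinct_requests: "distinct (requests j n)"
  using sorted_requests by (rule sorted_precedes_distinct)

declare ser_nodes.simps(2)[simp del]

definition threads_inv :: "'e conf \<Rightarrow> bool" where
  "threads_inv c \<longleftrightarrow> nlaunch c \<le> length txs \<and> (\<forall>t. (thr c t = None) = (nlaunch c \<le> t))
     \<and> (\<forall>t s. thr c t = Some s \<longrightarrow> tedge s = edge_of t \<and> (\<exists>p. tops s = drop p (ops_of t)))"

definition locks_inv :: "'e conf \<Rightarrow> bool" where
  "locks_inv c \<longleftrightarrow> (\<forall>j. wl c j = filter (\<lambda>r. \<not> granted c j r) (requests j (nlaunch c)))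
   \<and> (\<forall>j r r'. r \<in> set (requests j (nlaunch c)) \<longrightarrow> r' \<in> set (requests j (nlaunch c)) \<longrightarrow> precedes r r'
        \<longrightarrow> granted c j r' \<longrightarrow> granted c j r)
   \<and> (\<forall>j t m t' m'. (t, m) \<in> set (requests j (nlaunch c)) \<longrightarrow> (t', m') \<in> set (requests j (nlaunch c))
        \<longrightarrow> precedes (t, m) (t', m') \<longrightarrow> granted c j (t', m') \<longrightarrow> (m = Ex \<or> m' = Ex) \<longrightarrow> op_done c t (request_op t j m))
   \<and> (\<forall>j t m. (t, m) \<in> hold c j \<longrightarrow> (\<exists>s rest. thr c t = Some s \<and> tops s = request_op t j m # rest))"

definition created :: "'e conf \<Rightarrow> nid \<Rightarrow> bool" where
  "created c n \<longleftrightarrow> (\<exists>t i p. n = Nd t i p \<and> op_done c t (OInsert i) \<and> p \<in> new_parents t i)"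
definition freed :: "'e conf \<Rightarrow> nid \<Rightarrow> bool" where
  "freed c n \<longleftrightarrow> (\<exists>X. op_done c X OFree \<and> n \<in> removed_upto X k)"
definition node_record :: "nid \<Rightarrow> 'e node" where
  "node_record n = \<lparr>ned = node_edge n, npar = node_parent n\<rparr>"
definition read_view :: "nat \<Rightarrow> nat \<Rightarrow> (nid \<times> 'e list option) set" where
  "read_view t l = {(n, Some (node_path n)) | n. n \<in> ser_nodes (Suc t) l}"
definition answers_added :: "nat \<Rightarrow> 'e list set" where
  "answers_added t = {node_path p @ [edge_of t] | p. p \<in> new_parents t k}"

definition thread_inv :: "'e conf \<Rightarrow> nat \<Rightarrow> 'e thr \<Rightarrow> bool" where
  "thread_inv c t s \<longleftrightarrow> (case txs ! t of
     Ins \<sigma> \<Rightarrow> tE s = {} \<and> trem s = {} \<and> tadd s = (if op_done c t (OInsert k) then answers_added t else {})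
        \<and> (\<forall>i rest. tops s = OInsert i # rest \<longrightarrow> i \<noteq> 1 \<longrightarrow> trd s = read_view t (i - 1))
   | Del \<sigma> \<Rightarrow> tadd s = {} \<and> tE s = (\<Union>{removed_by t j | j. op_done c t (ODelete j)})
        \<and> trem s = (if op_done c t (ODelete k) then Some ` node_path ` removed_by t k else {}))"

definition data_inv :: "'e conf \<Rightarrow> bool" where
  "data_inv c \<longleftrightarrow> (\<forall>j. 1 \<le> j \<longrightarrow> (\<exists>N \<le> nlaunch c. lst c j = ser_nodes N j \<and> (\<forall>t. writes t j \<longrightarrow> (t < N \<longleftrightarrow> write_done c t j))))
   \<and> (\<forall>n. tree c n = (if created c n \<and> \<not> freed c n then Some (node_record n) else None))
   \<and> (\<forall>t i p. created c (Nd t i p) \<longrightarrow> 2 \<le> i \<longrightarrow> created c p)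
   \<and> (\<forall>t s. thr c t = Some s \<longrightarrow> thread_inv c t s)"

definition sys_inv :: "'e conf \<Rightarrow> bool" where
  "sys_inv c \<longleftrightarrow> threads_inv c \<and> locks_inv c \<and> data_inv c"

lemma wait_list_eq: "locks_inv c \<Longrightarrow> wl c j = filter (\<lambda>r. \<not> granted c j r) (requests j (nlaunch c))"
  by (simp add: locks_inv_def)

lemma granted_downward_closed: assumes "locks_inv c" "r \<in> set (requests j (nlaunch c))" "r' \<in> set (requests j (nlaunch c))" "precedes r r'" "granted c j r'"
  shows "granted c j r"
  using assms unfolding locks_inv_def by blast

lemma conflicting_predecessor_done: assumes "locks_inv c" "(t, m) \<in> set (requests j (nlaunch c))" "(t', m') \<in> set (requests j (nlaunch c))"
    "precedes (t, m) (t', m')" "granted c j (t', m')" "m = Ex \<or> m' = Ex"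
  shows "op_done c t (request_op t j m)"
  using assms unfolding locks_inv_def by blast

lemma holder_next_op: assumes "locks_inv c" "(t, m) \<in> hold c j"
  shows "\<exists>s rest. thr c t = Some s \<and> tops s = request_op t j m # rest"
  using assms unfolding locks_inv_def by blast

lemma locks_invI:
  assumes "\<And>j. wl c j = filter (\<lambda>r. \<not> granted c j r) (requests j (nlaunch c))"
    "\<And>j r r'. r \<in> set (requests j (nlaunch c)) \<Longrightarrow> r' \<in> set (requests j (nlaunch c)) \<Longrightarrow> precedes r r' \<Longrightarrow> granted c j r' \<Longrightarrow> granted c j r"
    "\<And>j t m t' m'. (t, m) \<in> set (requests j (nlaunch c)) \<Longrightarrow> (t', m') \<in> set (requests j (nlaunch c))
        \<Longrightarrow> precedes (t, m) (t', m') \<Longrightarrow> granted c j (t', m') \<Longrightarrow> m = Ex \<or> m' = Ex \<Longrightarrow> op_done c t (request_op t j m)"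
    "\<And>j t m. (t, m) \<in> hold c j \<Longrightarrow> \<exists>s rest. thr c t = Some s \<and> tops s = request_op t j m # rest"
  shows "locks_inv c"
  unfolding locks_inv_def using assms by blast

lemma thread_inv_cong: "(\<And>x. op_done c' t x = op_done c t x) \<Longrightarrow> thread_inv c' t s = thread_inv c t s"
  by (simp add: thread_inv_def split: txn.split)

lemma data_inv_lst: "data_inv c \<Longrightarrow> 1 \<le> j \<Longrightarrow> \<exists>N \<le> nlaunch c. lst c j = ser_nodes N j \<and> (\<forall>t. writes t j \<longrightarrow> (t < N \<longleftrightarrow> write_done c t j))"
  unfolding data_inv_def by blast
lemma data_inv_tree: "data_inv c \<Longrightarrow> tree c n = (if created c n \<and> \<not> freed c n then Some (node_record n) else None)"
  unfolding data_inv_def by blast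
lemma data_inv_parent_created: "data_inv c \<Longrightarrow> created c (Nd t i p) \<Longrightarrow> 2 \<le> i \<Longrightarrow> created c p"
  unfolding data_inv_def by blast
lemma data_inv_thread: "data_inv c \<Longrightarrow> thr c t = Some s \<Longrightarrow> thread_inv c t s"
  unfolding data_inv_def by blast

lemma lst_after_write:
  assumes id: "data_inv c" and j': "1 \<le> j'"
    and wd: "\<And>t' j''. write_done c' t' j'' \<longleftrightarrow> write_done c t' j'' \<or> (t' = t \<and> j'' = j)"
    and before: "\<forall>t'. writes t' j \<longrightarrow> (write_done c t' j \<longleftrightarrow> t' < t)"
    and lst_j: "lst c' j = ser_nodes (Suc t) j" and lst_other: "\<And>j''. j'' \<noteq> j \<Longrightarrow> lst c' j'' = lst c j''"
    and nl: "Suc t \<le> nlaunch c'" "nlaunch c \<le> nlaunch c'"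
  shows "\<exists>N \<le> nlaunch c'. lst c' j' = ser_nodes N j' \<and> (\<forall>t. writes t j' \<longrightarrow> (t < N \<longleftrightarrow> write_done c' t j'))"
proof (cases "j' = j")
  case True
  have "\<forall>t'. writes t' j' \<longrightarrow> (t' < Suc t \<longleftrightarrow> write_done c' t' j')" using before wd True by auto
  then show ?thesis using lst_j nl True by blast
next
  case False
  then show ?thesis using data_inv_lst[OF id j'] lst_other wd nl(2) by (metis order_trans)
qed

lemma data_invI:
  assumes "\<And>j. 1 \<le> j \<Longrightarrow> \<exists>N \<le> nlaunch c. lst c j = ser_nodes N j \<and> (\<forall>t. writes t j \<longrightarrow> (t < N \<longleftrightarrow> write_done c t j))"
    "\<And>n. tree c n = (if created c n \<and> \<not> freed c n then Some (node_record n) else None)"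
    "\<And>t i p. created c (Nd t i p) \<Longrightarrow> 2 \<le> i \<Longrightarrow> created c p"
    "\<And>t s. thr c t = Some s \<Longrightarrow> thread_inv c t s"
  shows "data_inv c"
  unfolding data_inv_def using assms by blast

lemma thread_inv_Ins: "txs ! t = Ins \<sigma> \<Longrightarrow> thread_inv c t s \<longleftrightarrow>
   (tE s = {} \<and> trem s = {} \<and> tadd s = (if op_done c t (OInsert k) then answers_added t else {})
        \<and> (\<forall>i rest. tops s = OInsert i # rest \<longrightarrow> i \<noteq> 1 \<longrightarrow> trd s = read_view t (i - 1)))"
  by (simp add: thread_inv_def)

lemma thread_inv_Del: "txs ! t = Del \<sigma> \<Longrightarrow> thread_inv c t s \<longleftrightarrow>
   (tadd s = {} \<and> tE s = (\<Union>{removed_by t j | j. op_done c t (ODelete j)})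
        \<and> trem s = (if op_done c t (ODelete k) then Some ` node_path ` removed_by t k else {}))"
  by (simp add: thread_inv_def)

lemma thr_launched: "threads_inv c \<Longrightarrow> thr c t = Some s \<Longrightarrow> t < nlaunch c"
  unfolding threads_inv_def by (metis not_le option.distinct(1))

lemma launched_thr: "threads_inv c \<Longrightarrow> t < nlaunch c \<Longrightarrow> \<exists>s. thr c t = Some s"
  unfolding threads_inv_def by (metis not_le not_None_eq)

lemma tops_suffix: "threads_inv c \<Longrightarrow> thr c t = Some s \<Longrightarrow> \<exists>p. tops s = drop p (ops_of t)"
  unfolding threads_inv_def by blast

lemma tedge_eq: "threads_inv c \<Longrightarrow> thr c t = Some s \<Longrightarrow> tedge s = edge_of t"
  unfolding threads_inv_def by blast

lemma op_done_iff: "threads_inv c \<Longrightarrow> thr c t = Some s \<Longrightarrow> op_done c t oo \<longleftrightarrow> oo \<in> set (ops_of t) \<and> oo \<notin> set (tops s)"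
  unfolding op_done_def using thr_launched by auto

lemma op_done_D: "op_done c t oo \<Longrightarrow> t < nlaunch c \<and> oo \<in> set (ops_of t)"
  unfolding op_done_def by simp

lemma sorted_tops: "threads_inv c \<Longrightarrow> thr c t = Some s \<Longrightarrow> sorted_wrt (\<lambda>a b. op_rank a < op_rank b) (tops s)"
  using tops_suffix sorted_ops_of sorted_wrt_drop by metis

lemma set_tops_subset: "threads_inv c \<Longrightarrow> thr c t = Some s \<Longrightarrow> set (tops s) \<subseteq> set (ops_of t)"
  using tops_suffix set_drop_subset by metis

lemma next_op_facts: "threads_inv c \<Longrightarrow> thr c t = Some s \<Longrightarrow> tops s = oo # rest \<Longrightarrow>
   oo \<in> set (ops_of t) \<and> oo \<notin> set rest \<and> set rest \<subseteq> set (ops_of t)"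
proof -
  assume a: "threads_inv c" "thr c t = Some s" "tops s = oo # rest"
  have "sorted_wrt (\<lambda>a b. op_rank a < op_rank b) (oo # rest)" using sorted_tops[OF a(1,2)] a(3) by simp
  then have "oo \<notin> set rest" by auto
  then show ?thesis using set_tops_subset[OF a(1,2)] a(3) by auto
qed

lemma next_op_not_done: "threads_inv c \<Longrightarrow> thr c t = Some s \<Longrightarrow> tops s = oo # rest \<Longrightarrow> \<not> op_done c t oo"
  using op_done_iff by fastforce

lemma op_done_before_next: "threads_inv c \<Longrightarrow> thr c t = Some s \<Longrightarrow> tops s = oo # rest \<Longrightarrow> a \<in> set (ops_of t)
   \<Longrightarrow> op_rank a < op_rank oo \<Longrightarrow> op_done c t a"
proof -
  assume a: "threads_inv c" "thr c t = Some s" "tops s = oo # rest" "a \<in> set (ops_of t)" "op_rank a < op_rank oo"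
  have "sorted_wrt (\<lambda>a b. op_rank a < op_rank b) (oo # rest)" using sorted_tops[OF a(1,2)] a(3) by simp
  then have "a \<notin> set (tops s)" using a(3,5) by auto
  then show ?thesis using op_done_iff[OF a(1,2)] a(4) by simp
qed

lemma op_not_done_after_next: "threads_inv c \<Longrightarrow> thr c t = Some s \<Longrightarrow> tops s = oo # rest \<Longrightarrow> b \<in> set (ops_of t)
   \<Longrightarrow> op_rank oo < op_rank b \<Longrightarrow> \<not> op_done c t b"
proof -
  assume a: "threads_inv c" "thr c t = Some s" "tops s = oo # rest" "b \<in> set (ops_of t)" "op_rank oo < op_rank b"
  obtain p where p: "tops s = drop p (ops_of t)" using tops_suffix[OF a(1,2)] by blast
  have "oo \<in> set (drop p (ops_of t))" using a(3) p by (metis list.set_intros(1))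
  then have "b \<in> set (drop p (ops_of t))" using drop_sorted_after[OF sorted_ops_of _ a(4) a(5)] by blast
  then show ?thesis using op_done_iff[OF a(1,2)] p by simp
qed

lemma op_done_before: "threads_inv c \<Longrightarrow> op_done c t b \<Longrightarrow> a \<in> set (ops_of t) \<Longrightarrow> op_rank a < op_rank b \<Longrightarrow> op_done c t a"
proof -
  assume a: "threads_inv c" "op_done c t b" "a \<in> set (ops_of t)" "op_rank a < op_rank b"
  obtain s where s: "thr c t = Some s" using launched_thr[OF a(1)] op_done_D[OF a(2)] by blast
  obtain p where p: "tops s = drop p (ops_of t)" using tops_suffix[OF a(1) s] by blast
  have nb: "b \<notin> set (tops s)" using op_done_iff[OF a(1) s] a(2) by simp
  have "a \<notin> set (tops s)"
  proof
    assume "a \<in> set (tops s)"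
    then have "b \<in> set (drop p (ops_of t))"
      using drop_sorted_after[OF sorted_ops_of[of t], of a p b] p op_done_D[OF a(2)] a(4) by simp
    then show False using nb p by simp
  qed
  then show ?thesis using op_done_iff[OF a(1) s] a(3) by simp
qed

lemma write_done_iff: "write_done c t j \<longleftrightarrow> op_done c t (request_op t j Ex)"
proof (cases "txs ! t")
  case (Ins \<sigma>)
  have "\<not> op_done c t (ODelete j)" using op_done_D ODelete_in_opsD Ins by fastforce
  then show ?thesis using Ins by (simp add: write_done_def request_op_def)
next
  case (Del \<sigma>)
  have "\<not> op_done c t (OInsert j)" using op_done_D OInsert_in_opsD Del by fastforce
  then show ?thesis using Del by (simp add: write_done_def request_op_def)
qed

lemma writes_iff: "writes t j \<longleftrightarrow> t < length txs \<and> request_op t j Ex \<in> set (ops_of t)"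
proof (cases "txs ! t")
  case (Ins \<sigma>)
  have "ODelete j \<notin> set (ops_of t)" using ODelete_in_opsD Ins by fastforce
  then show ?thesis using Ins by (auto simp: writes_def request_op_def)
next
  case (Del \<sigma>)
  have "OInsert j \<notin> set (ops_of t)" using OInsert_in_opsD Del by fastforce
  then show ?thesis using Del by (auto simp: writes_def request_op_def)
qed

lemma conflict_done_first:
  assumes "locks_inv c" "t < t'" "request_op t j m \<in> set (ops_of t)" "request_op t' j m' \<in> set (ops_of t')"
    "t' < nlaunch c" "m = Ex \<or> m' = Ex" "granted c j (t', m')"
  shows "op_done c t (request_op t j m)"
proof -
  have "(t, m) \<in> set (requests j (nlaunch c))" "(t', m') \<in> set (requests j (nlaunch c))"
    using assms by (auto simp: set_requests)
  moreover have "precedes (t, m) (t', m')" using assms(2) by simp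
  ultimately show ?thesis using assms(1,6,7) unfolding locks_inv_def by blast
qed

lemma ser_nodes_Suc_nonwriter: "1 \<le> j \<Longrightarrow> \<not> writes t j \<Longrightarrow> ser_nodes (Suc t) j = ser_nodes t j"
proof -
  assume j: "1 \<le> j" and nw: "\<not> writes t j"
  show ?thesis
  proof (cases "t < length txs")
    case False then show ?thesis by (simp add: ser_nodes_Suc_beyond)
  next
    case True
    show ?thesis
    proof (cases "txs ! t")
      case (Ins \<sigma>)
      have "OInsert j \<notin> set (ops_of t)" using nw True by (simp add: writes_def)
      then have "\<not> (matches \<sigma> j \<and> j \<le> k)" using OInsert_in_ops_iff[OF Ins] j by simp
      moreover have "edge_of t = \<sigma>" using Ins by (simp add: edge_of_def)
      moreover obtain j' where "j = Suc j'" using j by (cases j) auto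
      ultimately show ?thesis using ser_nodes_Suc_Ins[OF True Ins] by auto
    next
      case (Del \<sigma>)
      have nd: "ODelete j \<notin> set (ops_of t)" using nw True by (simp add: writes_def)
      have "removed_by t j = {}"
      proof (rule ccontr)
        assume "removed_by t j \<noteq> {}"
        then obtain a where "a \<in> removed_by t j" by blast
        then have "has_level (edge_of t) \<and> first_level (edge_of t) \<le> j \<and> j \<le> k" using del_at_guard by (auto simp: removed_by_def)
        then show False using nd ODelete_in_ops_iff[OF Del] Del by (simp add: edge_of_def)
      qed
      then show ?thesis using ser_nodes_Suc_Del[OF True Del] by simp
    qed
  qed
qed

lemma ser_nodes_eq_aux: "1 \<le> j \<Longrightarrow> N \<le> N' \<Longrightarrow> (\<forall>t. writes t j \<longrightarrow> (t < N \<longleftrightarrow> t < N')) \<Longrightarrow> ser_nodes N j = ser_nodes N' j"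
proof -
  assume j: "1 \<le> j" and le: "N \<le> N'" and w: "\<forall>t. writes t j \<longrightarrow> (t < N \<longleftrightarrow> t < N')"
  have "\<forall>m. N \<le> m \<longrightarrow> m \<le> N' \<longrightarrow> ser_nodes m j = ser_nodes N j"
  proof (intro allI impI)
    fix m assume "N \<le> m" "m \<le> N'"
    then show "ser_nodes m j = ser_nodes N j"
    proof (induction m rule: dec_induct)
      case base then show ?case by simp
    next
      case (step m)
      have "\<not> writes m j" using w step by auto
      then show ?case using ser_nodes_Suc_nonwriter[OF j] step by simp
    qed
  qed
  then have "ser_nodes N' j = ser_nodes N j" using le by blast
  then show ?thesis by simp
qed

lemma ser_nodes_eq: assumes j: "1 \<le> j" and w: "\<forall>t. writes t j \<longrightarrow> (t < N \<longleftrightarrow> t < N')" shows "ser_nodes N j = ser_nodes N' j"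
proof (cases "N \<le> N'")
  case True show ?thesis using ser_nodes_eq_aux[OF j True w] by simp
next
  case False
  then have le: "N' \<le> N" by simp
  have w': "\<forall>t. writes t j \<longrightarrow> (t < N' \<longleftrightarrow> t < N)" using w by blast
  show ?thesis using ser_nodes_eq_aux[OF j le w'] by simp
qed

subsection \<open>What a lock holder sees\<close>

lemma lst_eq_ser_nodes: "data_inv c \<Longrightarrow> 1 \<le> j \<Longrightarrow> (\<forall>t'. writes t' j \<longrightarrow> (write_done c t' j \<longleftrightarrow> t' < M)) \<Longrightarrow> lst c j = ser_nodes M j"
proof -
  assume d: "data_inv c" and j: "1 \<le> j" and w: "\<forall>t'. writes t' j \<longrightarrow> (write_done c t' j \<longleftrightarrow> t' < M)"
  obtain N where N: "lst c j = ser_nodes N j" "\<forall>t. writes t j \<longrightarrow> (t < N \<longleftrightarrow> write_done c t j)"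
    using d j unfolding data_inv_def by blast
  have "ser_nodes N j = ser_nodes M j" using ser_nodes_eq[OF j] N(2) w by blast
  then show ?thesis using N(1) by simp
qed

lemma writer_sees_predecessors:
  assumes inv: "sys_inv c" and s: "thr c t = Some s" and top: "tops s = request_op t j Ex # rest" and h: "(t, Ex) \<in> hold c j"
  shows "\<forall>t'. writes t' j \<longrightarrow> (write_done c t' j \<longleftrightarrow> t' < t)"
proof (intro allI impI)
  fix t' assume w: "writes t' j"
  have it: "threads_inv c" and il: "locks_inv c" using inv by (auto simp: sys_inv_def)
  have tl: "t < nlaunch c" using thr_launched[OF it s] .
  have rt: "request_op t j Ex \<in> set (ops_of t)" using next_op_facts[OF it s top] by simp
  have rt': "request_op t' j Ex \<in> set (ops_of t')" using w writes_iff by simp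
  have gt: "granted c j (t, Ex)" using h by (simp add: granted_def)
  have nd: "\<not> op_done c t (request_op t j Ex)" using next_op_not_done[OF it s top] .
  show "write_done c t' j \<longleftrightarrow> t' < t"
  proof (cases "t' < t")
    case True
    then have "op_done c t' (request_op t' j Ex)" using conflict_done_first[OF il True rt' rt tl _ gt] by simp
    then show ?thesis using True write_done_iff by simp
  next
    case False
    show ?thesis
    proof (cases "t' = t")
      case True then show ?thesis using nd write_done_iff by simp
    next
      case ne: False
      have "\<not> write_done c t' j"
      proof
        assume "write_done c t' j"
        then have dt: "op_done c t' (request_op t' j Ex)" using write_done_iff by simp
        then have "granted c j (t', Ex)" by (simp add: granted_def)
        moreover have "t < t'" using False ne by simp
        ultimately have "op_done c t (request_op t j Ex)" using conflict_done_first[OF il _ rt rt' _ _] op_done_D[OF dt] by simp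
        then show False using nd by simp
      qed
      then show ?thesis using False by simp
    qed
  qed
qed

lemma request_op_Sh: "request_op t j Sh = ORead j"
  by (simp add: request_op_def)

lemma reader_sees_predecessors:
  assumes inv: "sys_inv c" and s: "thr c t = Some s" and top: "tops s = ORead l # rest" and h: "(t, Sh) \<in> hold c l"
  shows "\<forall>t'. writes t' l \<longrightarrow> (write_done c t' l \<longleftrightarrow> t' < Suc t)"
proof (intro allI impI)
  fix t' assume w: "writes t' l"
  have it: "threads_inv c" and il: "locks_inv c" using inv by (auto simp: sys_inv_def)
  have tl: "t < nlaunch c" using thr_launched[OF it s] .
  have rt: "request_op t l Sh \<in> set (ops_of t)" using next_op_facts[OF it s top] by (simp add: request_op_Sh)
  have insT: "txs ! t = Ins (edge_of t)" using ORead_in_opsD rt by (simp add: request_op_Sh)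
  have rt': "request_op t' l Ex \<in> set (ops_of t')" using w writes_iff by simp
  have gt: "granted c j (t, Sh) \<longleftrightarrow> op_done c t (ORead j) \<or> (t, Sh) \<in> hold c j" for j
    by (simp add: granted_def request_op_Sh)
  have nd: "\<not> op_done c t (ORead l)" using next_op_not_done[OF it s top] .
  show "write_done c t' l \<longleftrightarrow> t' < Suc t"
  proof (cases "t' < t")
    case True
    then have "op_done c t' (request_op t' l Ex)" using conflict_done_first[OF il True rt' rt tl _ ] gt h by simp
    then show ?thesis using True write_done_iff by simp
  next
    case False
    show ?thesis
    proof (cases "t' = t")
      case True
      have "request_op t l Ex = OInsert l" using insT by (simp add: request_op_def)
      then have "op_done c t (request_op t l Ex)" using op_done_before_next[OF it s top] rt' True by simp
      then show ?thesis using True write_done_iff by simp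
    next
      case ne: False
      have "\<not> write_done c t' l"
      proof
        assume "write_done c t' l"
        then have dt: "op_done c t' (request_op t' l Ex)" using write_done_iff by simp
        then have "granted c l (t', Ex)" by (simp add: granted_def)
        moreover have "t < t'" using False ne by simp
        ultimately have "op_done c t (request_op t l Sh)" using conflict_done_first[OF il _ rt rt' _ _] op_done_D[OF dt] by simp
        then show False using nd by (simp add: request_op_Sh)
      qed
      then show ?thesis using False ne by simp
    qed
  qed
qed

lemma ancestor_created: "data_inv c \<Longrightarrow> created c x \<Longrightarrow> a \<in> ancestors x \<Longrightarrow> created c a"
proof (induction x)
  case Root then show ?case by simp
next
  case (Nd t i p)
  show ?case
  proof (cases "a = Nd t i p")
    case True then show ?thesis using Nd by simp
  next
    case False
    then have ap: "a \<in> ancestors p" using Nd.prems by simp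
    from Nd.prems(2) have d: "op_done c t (OInsert i)" "p \<in> new_parents t i" by (auto simp: created_def)
    have i1: "1 \<le> i" using OInsert_in_opsD op_done_D[OF d(1)] by blast
    show ?thesis
    proof (cases "2 \<le> i")
      case True
      then have "created c p" using Nd.prems(1,2) unfolding data_inv_def by blast
      then show ?thesis using Nd.IH Nd.prems(1) ap by blast
    next
      case False
      then have "i = 1" using i1 by simp
      then have "p = Root" using d(2) by (simp add: new_parents_def ser_nodes_0)
      then show ?thesis using ap by simp
    qed
  qed
qed

(* A deletion that frees an ancestor of a depth-l node has processed L^l before: this is
   where keeping partially removed nodes allocated until the end of the deletion matters. *)
lemma ancestor_not_freed:
  assumes it: "threads_inv c" and x: "x \<in> ser_nodes M l" and l1: "1 \<le> l" and a: "a \<in> ancestors x"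
    and nf: "\<forall>X. M \<le> X \<longrightarrow> ODelete l \<in> set (ops_of X) \<longrightarrow> \<not> op_done c X (ODelete l)"
  shows "\<not> freed c a"
proof
  assume "freed c a"
  then obtain X where X: "op_done c X OFree" "a \<in> removed_upto X k" by (auto simp: freed_def)
  have dl: "a \<in> removed_by X (node_depth a)" "1 \<le> node_depth a" using removed_upto_depth[OF X(2)] by auto
  have aX: "a \<in> ser_nodes X (node_depth a)" using dl(1) removed_by_iff by blast
  have g: "has_level (edge_of X) \<and> first_level (edge_of X) \<le> node_depth a \<and> node_depth a \<le> k" using dl(1) del_at_guard by (auto simp: removed_by_def)
  have al: "node_depth a \<le> l" "a \<in> ser_nodes M (node_depth a)" using ancestors_in_ser_nodes[OF x a] by auto
  have Xd: "txs ! X = Del (edge_of X)" using OFree_in_opsD op_done_D[OF X(1)] by blast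
  have Xl: "X < length txs" using op_done_D[OF X(1)] it by (auto simp: threads_inv_def)
  show False
  proof (cases "X < M")
    case True
    obtain ta pa where ta: "a = Nd ta (node_depth a) pa" "ta < X" using ser_nodes_nodeE[OF aX dl(2)] by blast
    have "a \<notin> ser_nodes (Suc X) (node_depth a)" using ser_nodes_Suc_Del[OF Xl Xd] dl(1) by simp
    then have "a \<notin> ser_nodes M (node_depth a)" using ser_nodes_removed_forever[of ta "node_depth a" pa "Suc X" M] ta True by simp
    then show False using al by simp
  next
    case False
    have lk: "l \<le> k" using ser_nodes_level_le[OF x l1] .
    have "ODelete l \<in> set (ops_of X)" using ODelete_in_ops_iff[OF Xd] g al lk by simp
    moreover have "op_done c X (ODelete l)"
      using op_done_before[OF it X(1) \<open>ODelete l \<in> set (ops_of X)\<close>] lk by simp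
    ultimately show False using nf False by simp
  qed
qed

lemma ancestors_present:
  assumes inv: "sys_inv c" and x: "x \<in> ser_nodes M l" and l1: "1 \<le> l"
    and wd: "\<forall>t'. writes t' l \<longrightarrow> t' < M \<longrightarrow> write_done c t' l"
    and nf: "\<forall>X. M \<le> X \<longrightarrow> ODelete l \<in> set (ops_of X) \<longrightarrow> \<not> op_done c X (ODelete l)"
  shows "\<forall>a \<in> ancestors x. tree c a = Some (node_record a)"
proof
  fix a assume a: "a \<in> ancestors x"
  have it: "threads_inv c" and id: "data_inv c" using inv by (auto simp: sys_inv_def)
  obtain t p where tp: "x = Nd t l p" "t < M" "t < length txs" "OInsert l \<in> set (ops_of t)" "p \<in> new_parents t l"
    using ser_nodes_nodeE[OF x l1] by blast
  have "writes t l" using tp by (simp add: writes_def)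
  then have "write_done c t l" using wd tp by simp
  moreover have "\<not> op_done c t (ODelete l)"
  proof
    assume "op_done c t (ODelete l)"
    then have "ODelete l \<in> set (ops_of t)" using op_done_D by blast
    then show False using ODelete_in_opsD OInsert_in_opsD tp(4) by fastforce
  qed
  ultimately have "op_done c t (OInsert l)" by (simp add: write_done_def)
  then have cx: "created c x" using tp by (auto simp: created_def)
  have ca: "created c a" using ancestor_created[OF id cx a] .
  have nfa: "\<not> freed c a" using ancestor_not_freed[OF it x l1 a nf] .
  show "tree c a = Some (node_record a)" using id ca nfa unfolding data_inv_def by simp
qed

lemma bt_eq_node_path: "(\<forall>a\<in>ancestors x. T a = Some (node_record a)) \<Longrightarrow> x \<in> ser_nodes M l \<Longrightarrow> bt l T x = Some (node_path x)"
proof (induction l arbitrary: x)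
  case 0 then show ?case by (simp add: ser_nodes_0)
next
  case (Suc l)
  obtain t p where tp: "x = Nd t (Suc l) p" "p \<in> ser_nodes M l" using ser_nodes_nodeE[OF Suc.prems(2)] by auto
  have Tx: "T x = Some (node_record x)" using Suc.prems(1) tp(1) by simp
  have "\<forall>a\<in>ancestors p. T a = Some (node_record a)" using Suc.prems(1) tp(1) by simp
  then have "bt l T p = Some (node_path p)" using Suc.IH tp(2) by blast
  then show ?case using Tx tp(1) by (simp add: node_record_def)
qed

lemma odd_rank_ORead: assumes "op_rank x = 2 * l + 1" shows "x = ORead l"
proof (cases x)
  case (ORead l') then show ?thesis using assms by simp
next
  case (OInsert i) then have "2 * i = 2 * l + 1" using assms by simp
  then have False by presburger
  then show ?thesis by simp
next
  case (ODelete i) then have "2 * i = 2 * l + 1" using assms by simp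
  then have False by presburger
  then show ?thesis by simp
next
  case OFree then have "2 * k + 2 = 2 * l + 1" using assms by simp
  then have False by presburger
  then show ?thesis by simp
qed

lemma read_before_insert:
  assumes it: "threads_inv c" and s: "thr c t = Some s" and top: "tops s = x # OInsert i # rest" and i: "i \<noteq> 1"
  shows "x = ORead (i - 1)"
proof -
  have srt: "sorted_wrt (\<lambda>a b. op_rank a < op_rank b) (x # OInsert i # rest)" using sorted_tops[OF it s] top by simp
  have oi: "OInsert i \<in> set (ops_of t)" using set_tops_subset[OF it s] top by auto
  have ins: "txs ! t = Ins (edge_of t)" and mi: "matches (edge_of t) i" "1 \<le> i" "i \<le> k" using OInsert_in_opsD[OF oi] by auto
  have i2: "2 \<le> i" using mi(2) i by simp
  have ro: "ORead (i - 1) \<in> set (ops_of t)" using ORead_in_ops_iff[OF ins] mi i2 by simp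
  have kx: "op_rank x < 2 * i" using srt by simp
  have kr: "op_rank (ORead (i - 1)) = 2 * i - 1" using i2 by simp
  show ?thesis
  proof (rule ccontr)
    assume ne: "x \<noteq> ORead (i - 1)"
    have "ORead (i - 1) \<notin> set rest" using srt kr by auto
    then have nt: "ORead (i - 1) \<notin> set (tops s)" using ne top by auto
    obtain p where p: "tops s = drop p (ops_of t)" using tops_suffix[OF it s] by blast
    have xin: "x \<in> set (drop p (ops_of t))" using top p by (metis list.set_intros(1))
    have "\<not> op_rank x < op_rank (ORead (i - 1))"
      using drop_sorted_after[OF sorted_ops_of xin ro] nt p by auto
    then have "op_rank x = 2 * i - 1" using kx kr by simp
    then have "x = ORead (i - 1)" using odd_rank_ORead[of x "i - 1"] i2 by (simp add: algebra_simps)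
    then show False using ne by simp
  qed
qed

lemma first_insert_level_1: "txs ! t = Ins \<sigma> \<Longrightarrow> ops_of t = OInsert i # rest \<Longrightarrow> i = 1"
proof (rule ccontr)
  assume ins: "txs ! t = Ins \<sigma>" and o: "ops_of t = OInsert i # rest" and i: "i \<noteq> 1"
  have oi: "OInsert i \<in> set (ops_of t)" using o by simp
  have mi: "matches \<sigma> i" "1 \<le> i" "i \<le> k" using OInsert_in_ops_iff[OF ins] oi by auto
  have "ORead (i - 1) \<in> set (ops_of t)" using ORead_in_ops_iff[OF ins] mi i by simp
  moreover have "sorted_wrt (\<lambda>a b. op_rank a < op_rank b) (OInsert i # rest)" using sorted_ops_of o by metis
  ultimately show False using o i mi by auto
qed

lemma insert_after_read:
  assumes it: "threads_inv c" and s: "thr c t = Some s" and top: "tops s = ORead l # OInsert i # rest" and i: "i \<noteq> 1"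
  shows "i = Suc l"
proof -
  have "OInsert i \<in> set (ops_of t)" using set_tops_subset[OF it s] top by auto
  then have "1 \<le> i" using OInsert_in_opsD by blast
  then show ?thesis using read_before_insert[OF it s top i] i by auto
qed

lemma no_consecutive_inserts:
  assumes it: "threads_inv c" and s: "thr c t = Some s" and top: "tops s = OInsert i # OInsert i' # rest" and i: "i' \<noteq> 1"
  shows False
  using read_before_insert[OF it s top i] by simp

lemma deletes_done_before:
  assumes it: "threads_inv c" and s: "thr c t = Some s" and top: "tops s = ODelete j # rest"
  shows "op_done c t (ODelete l) \<longleftrightarrow> ODelete l \<in> set (ops_of t) \<and> l < j"
proof
  assume d: "op_done c t (ODelete l)"
  have "ODelete l \<in> set (ops_of t)" using op_done_D[OF d] by simp
  moreover have "l < j"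
  proof (rule ccontr)
    assume "\<not> l < j"
    then have "l = j \<or> j < l" by auto
    then show False
    proof
      assume "l = j" then show False using next_op_not_done[OF it s top] d by simp
    next
      assume "j < l" then show False using op_not_done_after_next[OF it s top \<open>ODelete l \<in> set (ops_of t)\<close>] d by simp
    qed
  qed
  ultimately show "ODelete l \<in> set (ops_of t) \<and> l < j" by simp
next
  assume "ODelete l \<in> set (ops_of t) \<and> l < j"
  then show "op_done c t (ODelete l)" using op_done_before_next[OF it s top] by simp
qed

lemma removed_upto_ops: "txs ! t = Del \<sigma> \<Longrightarrow> removed_upto t J = \<Union>{removed_by t l | l. ODelete l \<in> set (ops_of t) \<and> l \<le> J}"
proof -
  assume d: "txs ! t = Del \<sigma>"
  have edge: "edge_of t = \<sigma>" using d by (simp add: edge_of_def)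
  show ?thesis
  proof (rule set_eqI)
    fix a
    show "a \<in> removed_upto t J \<longleftrightarrow> a \<in> \<Union>{removed_by t l | l. ODelete l \<in> set (ops_of t) \<and> l \<le> J}"
    proof
      assume "a \<in> removed_upto t J"
      then obtain l where l: "1 \<le> l" "l \<le> J" "a \<in> removed_by t l" unfolding removed_upto_def removed_by_def del_upto_iff by blast
      then have "has_level \<sigma> \<and> first_level \<sigma> \<le> l \<and> l \<le> k" using del_at_guard edge by (auto simp: removed_by_def)
      then have "ODelete l \<in> set (ops_of t)" using ODelete_in_ops_iff[OF d] by simp
      then show "a \<in> \<Union>{removed_by t l | l. ODelete l \<in> set (ops_of t) \<and> l \<le> J}" using l by blast
    next
      assume "a \<in> \<Union>{removed_by t l | l. ODelete l \<in> set (ops_of t) \<and> l \<le> J}"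
      then obtain l where l: "ODelete l \<in> set (ops_of t)" "l \<le> J" "a \<in> removed_by t l" by blast
      have "1 \<le> l" using ODelete_in_ops_iff[OF d] l(1) first_level_spec by fastforce
      then show "a \<in> removed_upto t J" using l unfolding removed_upto_def removed_by_def del_upto_iff by blast
    qed
  qed
qed

lemma op_done_step:
  assumes it: "threads_inv c" and s: "thr c t = Some s" and top: "tops s = oo # rest"
    and th: "thr c' = (thr c)(t \<mapsto> s')" and ts: "tops s' = rest" and nl: "nlaunch c' = nlaunch c"
  shows "op_done c' t' x \<longleftrightarrow> op_done c t' x \<or> (t' = t \<and> x = oo)"
proof (cases "t' = t")
  case True
  have nf: "oo \<in> set (ops_of t)" "oo \<notin> set rest" using next_op_facts[OF it s top] by auto
  have tl: "t < nlaunch c" using thr_launched[OF it s] .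
  show ?thesis using True nf tl th ts nl s top by (auto simp: op_done_def)
next
  case False
  then show ?thesis using th nl by (simp add: op_done_def)
qed

lemma threads_inv_step:
  assumes it: "threads_inv c" and s: "thr c t = Some s" and top: "tops s = oo # rest"
    and th: "thr c' = (thr c)(t \<mapsto> s')" and ts: "tops s' = rest" and te: "tedge s' = tedge s"
    and nl: "nlaunch c' = nlaunch c"
  shows "threads_inv c'"
proof -
  obtain p where p: "tops s = drop p (ops_of t)" using tops_suffix[OF it s] by blast
  have "rest = drop (Suc p) (ops_of t)" using p top by (metis drop_Suc list.sel(3) tl_drop)
  then have "\<exists>p. tops s' = drop p (ops_of t)" using ts by blast
  moreover have "tedge s' = edge_of t" using te tedge_eq[OF it s] by simp
  moreover have "t < nlaunch c" using thr_launched[OF it s] .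
  ultimately show ?thesis using it th nl unfolding threads_inv_def by auto
qed

lemma request_op_inj: "request_op t j m \<in> set (ops_of t) \<Longrightarrow> request_op t j m = request_op t j' m' \<Longrightarrow> j = j' \<and> m = m'"
  using op_lock_request_op by (metis Pair_inject option.inject)

lemma granted_step:
  assumes it: "threads_inv c" and il: "locks_inv c" and s: "thr c t = Some s" and top: "tops s = oo # rest"
    and th: "thr c' = (thr c)(t \<mapsto> s')" and ts: "tops s' = rest" and nl: "nlaunch c' = nlaunch c"
    and hc: "hold c' = (hold c)(jj := hold c jj - {(t, mm)})"
    and cond: "(oo = request_op t jj mm \<and> (t, mm) \<in> hold c jj) \<or> oo = OFree"
  shows "granted c' j r \<longleftrightarrow> granted c j r"
proof -
  obtain t1 m1 where r: "r = (t1, m1)" by (cases r)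
  have du: "op_done c' t1 x \<longleftrightarrow> op_done c t1 x \<or> (t1 = t \<and> x = oo)" for x using op_done_step[OF it s top th ts nl] .
  have oin: "oo \<in> set (ops_of t)" using next_op_facts[OF it s top] by simp
  show ?thesis
  proof (cases "oo = OFree")
    case True
    have "(t, mm) \<notin> hold c jj"
    proof
      assume "(t, mm) \<in> hold c jj"
      then obtain s2 rest2 where "thr c t = Some s2" "tops s2 = request_op t jj mm # rest2"
        using holder_next_op[OF il] by blast
      then show False using s top True request_op_ne_OFree by simp
    qed
    then have "hold c' = hold c" using hc by auto
    then show ?thesis using du r True request_op_ne_OFree by (simp add: granted_def)
  next
    case False
    from cond have c1: "oo = request_op t jj mm \<and> (t, mm) \<in> hold c jj"
    proof
      assume "oo = OFree" then show ?thesis using False by simp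
    qed
    then have c1: "oo = request_op t jj mm" "(t, mm) \<in> hold c jj" by simp_all
    show ?thesis
    proof (cases "t1 = t \<and> request_op t j m1 = oo")
      case True
      have e: "request_op t jj mm = request_op t j m1" using True c1(1) by metis
      have rin: "request_op t jj mm \<in> set (ops_of t)" using oin c1(1) by metis
      have jm: "jj = j \<and> mm = m1" using request_op_inj[OF rin e] .
      have g1: "granted c j r" using r c1(2) True jm by (simp add: granted_def)
      have "op_done c' t oo" using du True by blast
      then have g2: "granted c' j r" using r True by (simp add: granted_def)
      show ?thesis using g1 g2 by simp
    next
      case nt: False
      have d1: "op_done c' t1 (request_op t1 j m1) \<longleftrightarrow> op_done c t1 (request_op t1 j m1)" using du nt by blast
      have h1: "(t1, m1) \<in> hold c' j \<longleftrightarrow> (t1, m1) \<in> hold c j \<and> \<not> (j = jj \<and> (t1, m1) = (t, mm))"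
        using hc by auto
      have h2: "j = jj \<and> (t1, m1) = (t, mm) \<Longrightarrow> op_done c' t1 (request_op t1 j m1)"
      proof -
        assume a: "j = jj \<and> (t1, m1) = (t, mm)"
        then have "request_op t1 j m1 = oo" using c1(1) by simp
        then show ?thesis using du a by blast
      qed
      have h3: "j = jj \<and> (t1, m1) = (t, mm) \<Longrightarrow> (t1, m1) \<in> hold c j" using c1(2) by simp
      show ?thesis unfolding r granted_def fst_conv snd_conv using d1 h1 h2 h3 by blast
    qed
  qed
qed

lemma locks_inv_step:
  assumes it: "threads_inv c" and il: "locks_inv c" and s: "thr c t = Some s" and top: "tops s = oo # rest"
    and th: "thr c' = (thr c)(t \<mapsto> s')" and ts: "tops s' = rest" and nl: "nlaunch c' = nlaunch c"
    and wlq: "wl c' = wl c"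
    and hc: "hold c' = (hold c)(jj := hold c jj - {(t, mm)})"
    and cond: "(oo = request_op t jj mm \<and> (t, mm) \<in> hold c jj) \<or> oo = OFree"
  shows "locks_inv c'"
proof -
  have g: "\<And>j. granted c' j = granted c j"
    using granted_step[OF it il s top th ts nl hc cond] by blast
  have du: "\<And>t1 x. op_done c t1 x \<Longrightarrow> op_done c' t1 x" using op_done_step[OF it s top th ts nl] by blast
  have oin: "oo \<in> set (ops_of t)" using next_op_facts[OF it s top] by simp
  have H: "\<forall>j t1 m. (t1, m) \<in> hold c' j \<longrightarrow> (\<exists>s rest. thr c' t1 = Some s \<and> tops s = request_op t1 j m # rest)"
  proof (intro allI impI)
    fix j t1 m assume "(t1, m) \<in> hold c' j"
    then have h1: "(t1, m) \<in> hold c j" "\<not> (j = jj \<and> (t1, m) = (t, mm))" using hc by (auto split: if_splits)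
    obtain s2 rest2 where s2: "thr c t1 = Some s2" "tops s2 = request_op t1 j m # rest2"
      using holder_next_op[OF il h1(1)] by blast
    show "\<exists>s rest. thr c' t1 = Some s \<and> tops s = request_op t1 j m # rest"
    proof (cases "t1 = t")
      case True
      then have "oo = request_op t j m" using s2 s top by simp
      then show ?thesis
      proof (cases "oo = OFree")
        case True then show ?thesis using \<open>oo = request_op t j m\<close> request_op_ne_OFree by simp
      next
        case False
        then have "oo = request_op t jj mm" using cond by simp
        then have "j = jj \<and> m = mm" using request_op_inj[of t j m jj mm] \<open>oo = request_op t j m\<close> oin by simp
        then show ?thesis using h1(2) True by simp
      qed
    next
      case False then show ?thesis using s2 th by simp
    qed
  qed
  show ?thesis
  proof (rule locks_invI)
    fix j show "wl c' j = filter (\<lambda>r. \<not> granted c' j r) (requests j (nlaunch c'))"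
      using wait_list_eq[OF il] g nl wlq by simp
  next
    fix j r r' assume "r \<in> set (requests j (nlaunch c'))" "r' \<in> set (requests j (nlaunch c'))" "precedes r r'" "granted c' j r'"
    then show "granted c' j r" using granted_downward_closed[OF il] g nl by simp
  next
    fix j t1 m t' m' assume "(t1, m) \<in> set (requests j (nlaunch c'))" "(t', m') \<in> set (requests j (nlaunch c'))"
      "precedes (t1, m) (t', m')" "granted c' j (t', m')" "m = Ex \<or> m' = Ex"
    then show "op_done c' t1 (request_op t1 j m)" using conflicting_predecessor_done[OF il] g nl du by simp
  next
    fix j t1 m assume "(t1, m) \<in> hold c' j"
    then show "\<exists>s rest. thr c' t1 = Some s \<and> tops s = request_op t1 j m # rest" using H by blast
  qed
qed

section \<open>Preservation of the invariant\<close>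

lemma sys_inv_init: "sys_inv conf_init"
proof -
  have "threads_inv conf_init" by (simp add: threads_inv_def conf_init_def)
  moreover have "locks_inv conf_init" by (simp add: locks_inv_def conf_init_def requests_def)
  moreover have "data_inv conf_init"
  proof -
    have d: "\<not> op_done conf_init t x" for t x by (simp add: op_done_def conf_init_def)
    have "\<forall>j. 1 \<le> j \<longrightarrow> (\<exists>N \<le> nlaunch conf_init. lst conf_init j = ser_nodes N j \<and> (\<forall>t. writes t j \<longrightarrow> (t < N \<longleftrightarrow> write_done conf_init t j)))"
      using d by (auto simp: conf_init_def write_done_def intro!: exI[of _ 0])
    moreover have "\<forall>n. tree conf_init n = (if created conf_init n \<and> \<not> freed conf_init n then Some (node_record n) else None)"
      using d by (simp add: created_def conf_init_def)
    moreover have "\<forall>t i p. created conf_init (Nd t i p) \<longrightarrow> 2 \<le> i \<longrightarrow> created conf_init p"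
      using d by (simp add: created_def)
    moreover have "\<forall>t s. thr conf_init t = Some s \<longrightarrow> thread_inv conf_init t s" by (simp add: conf_init_def)
    ultimately show ?thesis unfolding data_inv_def by blast
  qed
  ultimately show ?thesis by (simp add: sys_inv_def)
qed

definition launched :: "'e conf \<Rightarrow> 'e conf" where
  "launched c = c\<lparr>nlaunch := Suc (nlaunch c),
     wl := (\<lambda>j. wl c j @ requests_of (nlaunch c) j),
     thr := (thr c)(nlaunch c \<mapsto> init_thr (edge_of (nlaunch c)) (ops_of (nlaunch c)))\<rparr>"

lemma thr_launching: "threads_inv c \<Longrightarrow> thr c (nlaunch c) = None"
  unfolding threads_inv_def by simp

lemma op_done_launched: "op_done (launched c) = op_done c"
  by (auto simp: op_done_def launched_def init_thr_def less_Suc_eq intro!: ext)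

lemma granted_launched: "granted (launched c) = granted c"
  using op_done_launched by (auto simp: granted_def launched_def intro!: ext)

lemma not_granted_launching:
  assumes "threads_inv c" "locks_inv c"
  shows "\<not> granted c j (nlaunch c, m)"
  using holder_next_op[OF assms(2), of "nlaunch c" m j] thr_launching[OF assms(1)]
  by (auto simp: granted_def op_done_def)

lemma threads_inv_launched:
  "threads_inv c \<Longrightarrow> nlaunch c < length txs \<Longrightarrow> threads_inv (launched c)"
  unfolding threads_inv_def launched_def by (auto simp: init_thr_def intro: exI[of _ 0])

lemma locks_inv_launched:
  assumes it: "threads_inv c" and il: "locks_inv c"
  shows "locks_inv (launched c)"
proof -
  let ?n = "nlaunch c"
  have g: "granted (launched c) = granted c" using granted_launched .
  have requests': "requests j (nlaunch (launched c)) = requests j ?n @ requests_of ?n j" for j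
    by (simp add: launched_def requests_Suc)
  have old_if_granted: "r \<in> set (requests j ?n)"
    if "r \<in> set (requests j (nlaunch (launched c)))" "granted c j r" for j r
  proof -
    have "r \<in> set (requests j ?n) \<or> r \<in> set (requests_of ?n j)" using that(1) requests' by simp
    then show ?thesis using that(2) not_granted_launching[OF it il] by (auto simp: set_requests_of)
  qed
  have old_if_precedes: "r \<in> set (requests j ?n)"
    if "r \<in> set (requests j (nlaunch (launched c)))" "precedes r r'" "r' \<in> set (requests j ?n)" for j r r'
  proof -
    have "r \<in> set (requests j ?n) \<or> r \<in> set (requests_of ?n j)" using that(1) requests' by simp
    then show ?thesis using that(2,3) by (cases r; cases r') (auto simp: set_requests_of set_requests)
  qed
  show ?thesis
  proof (rule locks_invI)
    fix j
    have "filter (\<lambda>r. \<not> granted c j r) (requests_of ?n j) = requests_of ?n j"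
      using not_granted_launching[OF it il] by (auto simp: set_requests_of intro!: filter_True)
    then show "wl (launched c) j = filter (\<lambda>r. \<not> granted (launched c) j r) (requests j (nlaunch (launched c)))"
      using wait_list_eq[OF il, of j] unfolding requests' g by (simp add: launched_def)
  next
    fix j r r' assume "r \<in> set (requests j (nlaunch (launched c)))" "r' \<in> set (requests j (nlaunch (launched c)))"
      "precedes r r'" "granted (launched c) j r'"
    then show "granted (launched c) j r"
      using granted_downward_closed[OF il] old_if_granted old_if_precedes g by metis
  next
    fix j t m t' m' assume a: "(t, m) \<in> set (requests j (nlaunch (launched c)))"
      "(t', m') \<in> set (requests j (nlaunch (launched c)))"
      "precedes (t, m) (t', m')" "granted (launched c) j (t', m')" "m = Ex \<or> m' = Ex"
    then have "(t', m') \<in> set (requests j ?n)" using old_if_granted g by simp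
    then show "op_done (launched c) t (request_op t j m)"
      using conflicting_predecessor_done[OF il] old_if_precedes a g op_done_launched by metis
  next
    fix j t m assume "(t, m) \<in> hold (launched c) j"
    then have "(t, m) \<in> hold c j" "t \<noteq> ?n"
      using not_granted_launching[OF it il] by (auto simp: launched_def granted_def)
    then show "\<exists>s rest. thr (launched c) t = Some s \<and> tops s = request_op t j m # rest"
      using holder_next_op[OF il] by (simp add: launched_def)
  qed
qed

lemma thread_inv_launching:
  "thread_inv c n (init_thr (edge_of n) (ops_of n))" if "\<And>x. \<not> op_done c n x"
proof (cases "txs ! n")
  case (Ins \<sigma>)
  then show ?thesis using that first_insert_level_1[OF Ins] by (auto simp: thread_inv_def init_thr_def)
next
  case (Del \<sigma>)
  then show ?thesis using that by (auto simp: thread_inv_def init_thr_def)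
qed

lemma data_inv_launched:
  assumes it: "threads_inv c" and id: "data_inv c"
  shows "data_inv (launched c)"
proof -
  have d: "op_done (launched c) = op_done c" using op_done_launched .
  have "write_done (launched c) = write_done c" "created (launched c) = created c"
    "freed (launched c) = freed c" "thread_inv (launched c) = thread_inv c"
    unfolding write_done_def[abs_def] created_def[abs_def] freed_def[abs_def] thread_inv_def[abs_def] d
    by simp_all
  moreover have "\<not> op_done c (nlaunch c) x" for x by (simp add: op_done_def)
  ultimately show ?thesis
    using id thread_inv_launching unfolding data_inv_def
    by (auto simp: launched_def le_Suc_eq intro: le_SucI)
qed

lemma sys_inv_launched: "sys_inv c \<Longrightarrow> nlaunch c < length txs \<Longrightarrow> sys_inv (launched c)"
  unfolding sys_inv_def
  using threads_inv_launched locks_inv_launched data_inv_launched by blast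

definition granting :: "'e conf \<Rightarrow> nat \<Rightarrow> nat \<times> mode \<Rightarrow> (nat \<times> mode) list \<Rightarrow> 'e conf" where
  "granting c j r w = c\<lparr>wl := (wl c)(j := w), hold := (hold c)(j := insert r (hold c j))\<rparr>"

lemma op_done_granting: "op_done (granting c j r w) = op_done c"
  by (auto simp: op_done_def granting_def intro!: ext)

lemma granted_granting: "granted (granting c j r w) j' r' \<longleftrightarrow> granted c j' r' \<or> (j' = j \<and> r' = r)"
  using op_done_granting by (auto simp: granted_def granting_def)

lemma wait_list_head_predecessors_granted:
  assumes il: "locks_inv c" and w: "wl c j = r # w"
    and r': "r' \<in> set (requests j (nlaunch c))" "precedes r' r"
  shows "granted c j r'"
proof (rule ccontr)
  assume "\<not> granted c j r'"
  then have "r' \<in> set (wl c j)" using wait_list_eq[OF il] r'(1) by simp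
  moreover have "r' \<noteq> r" using r'(2) precedes_irrefl by blast
  ultimately have "r' \<in> set w" using w by simp
  moreover have "sorted_wrt precedes (wl c j)"
    using wait_list_eq[OF il] sorted_requests sorted_wrt_filter by metis
  ultimately have "precedes r r'" using w by simp
  then show False using precedes_asym r'(2) by blast
qed

lemma locks_inv_granting:
  assumes il: "locks_inv c" and s: "thr c t = Some s" and top: "tops s = request_op t j m # rest"
    and w: "wl c j = (t, m) # w" and cp: "compat m (hold c j)"
  shows "locks_inv (granting c j (t, m) w)" (is "locks_inv ?c'")
proof (rule locks_invI)
  fix j'
  have "filter (\<lambda>r. \<not> granted c j r \<and> r \<noteq> (t, m)) (requests j (nlaunch c)) = w"
    using filter_remove_head[OF distinct_requests] wait_list_eq[OF il] w by simp
  then show "wl ?c' j' = filter (\<lambda>r. \<not> granted ?c' j' r) (requests j' (nlaunch ?c'))"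
    using wait_list_eq[OF il, of j'] granted_granting by (auto simp: granting_def)
next
  fix j' r r' assume a: "r \<in> set (requests j' (nlaunch ?c'))" "r' \<in> set (requests j' (nlaunch ?c'))"
    "precedes r r'" "granted ?c' j' r'"
  have req: "r \<in> set (requests j' (nlaunch c))" "r' \<in> set (requests j' (nlaunch c))"
    using a(1,2) by (simp_all add: granting_def)
  show "granted ?c' j' r"
  proof (cases "granted c j' r'")
    case True
    then show ?thesis using granted_downward_closed[OF il req a(3)] granted_granting by blast
  next
    case False
    then have "j' = j" "r' = (t, m)" using a(4) granted_granting by auto
    then show ?thesis using wait_list_head_predecessors_granted[OF il w] req a(3) granted_granting by blast
  qed
next
  fix j' t0 m0 t1 m1
  assume a: "(t0, m0) \<in> set (requests j' (nlaunch ?c'))" "(t1, m1) \<in> set (requests j' (nlaunch ?c'))"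
    "precedes (t0, m0) (t1, m1)" "granted ?c' j' (t1, m1)" "m0 = Ex \<or> m1 = Ex"
  show "op_done ?c' t0 (request_op t0 j' m0)"
  proof (cases "granted c j' (t1, m1)")
    case True
    moreover have "nlaunch ?c' = nlaunch c" by (simp add: granting_def)
    ultimately show ?thesis using conflicting_predecessor_done[OF il] a by (simp add: op_done_granting)
  next
    case False
    then have new: "j' = j" "(t1, m1) = (t, m)" using a(4) granted_granting by auto
    then have "granted c j (t0, m0)"
      using wait_list_head_predecessors_granted[OF il w] a by (simp add: granting_def)
    moreover have "(t0, m0) \<notin> hold c j"
      using cp a(5) new unfolding compat_def by auto
    ultimately show ?thesis using new by (simp add: granted_def op_done_granting)
  qed
next
  fix j' t0 m0 assume "(t0, m0) \<in> hold ?c' j'"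
  then show "\<exists>s rest. thr ?c' t0 = Some s \<and> tops s = request_op t0 j' m0 # rest"
    using holder_next_op[OF il] s top by (auto simp: granting_def split: if_splits)
qed

lemma sys_inv_granting:
  assumes inv: "sys_inv c" and s: "thr c t = Some s" and top: "tops s = op # rest"
    and lk: "op_lock op = Some (j, m)" and w: "wl c j = (t, m) # w" and cp: "compat m (hold c j)"
  shows "sys_inv (granting c j (t, m) w)"
proof -
  have it: "threads_inv c" and il: "locks_inv c" and id: "data_inv c" using inv by (auto simp: sys_inv_def)
  have "op = request_op t j m"
    using op_lock_eq_request_op[OF conjunct1[OF next_op_facts[OF it s top]]] lk by blast
  then have "locks_inv (granting c j (t, m) w)" using locks_inv_granting[OF il s _ w cp] top by simp
  moreover have "threads_inv (granting c j (t, m) w)" using it by (simp add: threads_inv_def granting_def)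
  moreover have "data_inv (granting c j (t, m) w)"
    using id unfolding data_inv_def write_done_def[abs_def] created_def[abs_def] freed_def[abs_def]
      thread_inv_def[abs_def] op_done_granting
    by (simp add: granting_def)
  ultimately show ?thesis by (simp add: sys_inv_def)
qed

lemma do_op_read: "tops s = ORead j # rest \<Longrightarrow> do_op k join_ok t s c =
   c\<lparr>thr := (thr c)(t \<mapsto> s\<lparr>tops := rest, trd := {(n, bt j (tree c) n) | n. n \<in> lst c j}\<rparr>)\<rparr>"
  by (simp add: do_op_def)

lemma do_op_insert: "tops s = OInsert i # rest \<Longrightarrow>
   NW = {(p, m). (p, Some m) \<in> (if i = 1 then {(Root, Some [])} else trd s) \<and> join_ok m (tedge s)} \<Longrightarrow>
   do_op k join_ok t s c = c\<lparr>tree := (\<lambda>n. case n of Nd t' i' p \<Rightarrow> (if t' = t \<and> i' = i \<and> (\<exists>m. (p, m) \<in> NW)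
                              then Some \<lparr>ned = tedge s, npar = p\<rparr> else tree c n) | Root \<Rightarrow> tree c n),
       lst := (lst c)(i := lst c i \<union> {Nd t i p | p m. (p, m) \<in> NW}),
       thr := (thr c)(t \<mapsto> s\<lparr>tops := rest,
                     tadd := tadd s \<union> (if i = k then {m @ [tedge s] | p m. (p, m) \<in> NW} else {})\<rparr>)\<rparr>"
proof -
  assume a1: "tops s = OInsert i # rest"
    and a2: "NW = {(p, m). (p, Some m) \<in> (if i = 1 then {(Root, Some [])} else trd s) \<and> join_ok m (tedge s)}"
  show ?thesis unfolding a2 using a1 by (simp add: do_op_def Let_def)
qed

lemma do_op_delete: "tops s = ODelete j # rest \<Longrightarrow>
   R = {n \<in> lst c j. case tree c n of None \<Rightarrow> False | Some nd \<Rightarrow> ned nd = tedge s \<or> npar nd \<in> tE s} \<Longrightarrow>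
   do_op k join_ok t s c = c\<lparr>lst := (lst c)(j := lst c j - R),
       thr := (thr c)(t \<mapsto> s\<lparr>tops := rest, tE := tE s \<union> R,
                     trem := trem s \<union> (if j = k then bt k (tree c) ` R else {})\<rparr>)\<rparr>"
proof -
  assume a1: "tops s = ODelete j # rest"
    and a2: "R = {n \<in> lst c j. case tree c n of None \<Rightarrow> False | Some nd \<Rightarrow> ned nd = tedge s \<or> npar nd \<in> tE s}"
  show ?thesis unfolding a2 using a1 by (simp add: do_op_def Let_def)
qed

lemma do_op_free: "tops s = OFree # rest \<Longrightarrow> do_op k join_ok t s c =
   c\<lparr>tree := (\<lambda>n. if n \<in> tE s then None else tree c n), thr := (thr c)(t \<mapsto> s\<lparr>tops := rest\<rparr>)\<rparr>"
  by (simp add: do_op_def)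

lemma data_inv_stepI:
  assumes id: "data_inv c" and thr': "thr c' = (thr c)(t \<mapsto> s')"
    and others: "\<And>t' x. t' \<noteq> t \<Longrightarrow> op_done c' t' x = op_done c t' x"
    and "\<And>j. 1 \<le> j \<Longrightarrow> \<exists>N \<le> nlaunch c'. lst c' j = ser_nodes N j \<and> (\<forall>t. writes t j \<longrightarrow> (t < N \<longleftrightarrow> write_done c' t j))"
    "\<And>n. tree c' n = (if created c' n \<and> \<not> freed c' n then Some (node_record n) else None)"
    "\<And>t i p. created c' (Nd t i p) \<Longrightarrow> 2 \<le> i \<Longrightarrow> created c' p"
    and own: "thread_inv c' t s'"
  shows "data_inv c'"
proof (rule data_invI)
  fix t' s'' assume ts: "thr c' t' = Some s''"
  show "thread_inv c' t' s''"
  proof (cases "t' = t")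
    case True
    then show ?thesis using own ts thr' by simp
  next
    case False
    then have "thread_inv c t' s''" using ts thr' data_inv_thread[OF id] by simp
    then show ?thesis using thread_inv_cong[of c' t' c s''] others False by simp
  qed
qed (use assms in blast)+

lemma read_returns_read_view:
  assumes inv: "sys_inv c" and s: "thr c t = Some s" and top: "tops s = ORead l # rest" and h: "(t, Sh) \<in> hold c l"
  shows "{(n, bt l (tree c) n) | n. n \<in> lst c l} = read_view t l"
proof -
  have it: "threads_inv c" and il: "locks_inv c" and id: "data_inv c" using inv by (auto simp: sys_inv_def)
  have ro: "ORead l \<in> set (ops_of t)" using next_op_facts[OF it s top] by simp
  have l1: "1 \<le> l" using ORead_in_opsD[OF ro] by auto
  have rv: "\<forall>t'. writes t' l \<longrightarrow> (write_done c t' l \<longleftrightarrow> t' < Suc t)" using reader_sees_predecessors[OF inv s top h] .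
  have lstv: "lst c l = ser_nodes (Suc t) l" using lst_eq_ser_nodes[OF id l1 rv] .
  have nd: "\<not> op_done c t (ORead l)" using next_op_not_done[OF it s top] .
  have prs: "\<forall>a\<in>ancestors x. tree c a = Some (node_record a)" if x: "x \<in> ser_nodes (Suc t) l" for x
  proof (rule ancestors_present[OF inv x l1])
    show "\<forall>t'. writes t' l \<longrightarrow> t' < Suc t \<longrightarrow> write_done c t' l" using rv by blast
    show "\<forall>X. Suc t \<le> X \<longrightarrow> ODelete l \<in> set (ops_of X) \<longrightarrow> \<not> op_done c X (ODelete l)"
    proof (intro allI impI notI)
      fix X assume X: "Suc t \<le> X" "ODelete l \<in> set (ops_of X)" "op_done c X (ODelete l)"
      have "txs ! X = Del (edge_of X)" using ODelete_in_opsD[OF X(2)] by simp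
      then have rX: "request_op X l Ex = ODelete l" by (simp add: request_op_def)
      have "granted c l (X, Ex)" using X(3) rX by (simp add: granted_def)
      then have "op_done c t (request_op t l Sh)"
        using conflict_done_first[OF il _ _ _ _ _, of t X l Sh Ex] X ro rX op_done_D[OF X(3)] by (simp add: request_op_Sh)
      then show False using nd by (simp add: request_op_Sh)
    qed
  qed
  have "\<And>n. n \<in> ser_nodes (Suc t) l \<Longrightarrow> bt l (tree c) n = Some (node_path n)"
    using bt_eq_node_path prs by blast
  then show ?thesis unfolding lstv read_view_def by auto
qed

lemma data_inv_read:
  assumes inv: "sys_inv c" and s: "thr c t = Some s" and top: "tops s = ORead l # rest" and h: "(t, Sh) \<in> hold c l"
    and c': "c' = c\<lparr>thr := (thr c)(t \<mapsto> s1), hold := H'\<rparr>"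
    and s1: "s1 = s\<lparr>tops := rest, trd := {(n, bt l (tree c) n) | n. n \<in> lst c l}\<rparr>"
  shows "data_inv c'"
proof -
  have it: "threads_inv c" and id: "data_inv c" using inv by (auto simp: sys_inv_def)
  have ro: "ORead l \<in> set (ops_of t)" using next_op_facts[OF it s top] by simp
  have ins: "txs ! t = Ins (edge_of t)" using ORead_in_opsD[OF ro] by auto
  have rdeq: "{(n, bt l (tree c) n) | n. n \<in> lst c l} = read_view t l"
    using read_returns_read_view[OF inv s top h] .
  have thr': "thr c' = (thr c)(t \<mapsto> s1)" using c' by simp
  have du: "op_done c' t' x \<longleftrightarrow> op_done c t' x \<or> (t' = t \<and> x = ORead l)" for t' x
    using op_done_step[OF it s top thr'] s1 c' by simp
  have wd: "write_done c' = write_done c" using du by (auto simp: write_done_def intro!: ext)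
  have cr: "created c' = created c" using du by (auto simp: created_def intro!: ext)
  have fr: "freed c' = freed c" using du by (auto simp: freed_def intro!: ext)
  show ?thesis
  proof (rule data_inv_stepI[OF id thr'])
    show "\<And>t' x. t' \<noteq> t \<Longrightarrow> op_done c' t' x = op_done c t' x" using du by simp
  next
    fix j :: nat assume "1 \<le> j"
    then show "\<exists>N \<le> nlaunch c'. lst c' j = ser_nodes N j \<and> (\<forall>t. writes t j \<longrightarrow> (t < N \<longleftrightarrow> write_done c' t j))"
      using data_inv_lst[OF id] c' wd by simp
  next
    fix n show "tree c' n = (if created c' n \<and> \<not> freed c' n then Some (node_record n) else None)"
      using data_inv_tree[OF id] c' cr fr by simp
  next
    fix t0 i p assume "created c' (Nd t0 i p)" "2 \<le> i"
    then show "created c' p" using data_inv_parent_created[OF id] cr by simp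
  next
    have tk: "thread_inv c t s" using data_inv_thread[OF id s] .
    have "\<forall>i rest'. rest = OInsert i # rest' \<longrightarrow> i \<noteq> 1 \<longrightarrow> read_view t l = read_view t (i - 1)"
      using insert_after_read[OF it s] top by fastforce
    moreover have "op_done c' t (OInsert k) = op_done c t (OInsert k)" using du by simp
    ultimately show "thread_inv c' t s1"
      using tk[unfolded thread_inv_Ins[OF ins]] s1 rdeq unfolding thread_inv_Ins[OF ins] by simp
  qed
qed

lemma ser_nodes_Suc_Ins_level:
  assumes tl: "t < length txs" and ins: "txs ! t = Ins \<sigma>" and oi: "OInsert i \<in> set (ops_of t)"
  shows "ser_nodes (Suc t) i = ser_nodes t i \<union> {Nd t i p | p. p \<in> new_parents t i}"
proof -
  have mi: "matches \<sigma> i" "1 \<le> i" "i \<le> k" using OInsert_in_ops_iff[OF ins] oi by auto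
  obtain i' where i': "i = Suc i'" using mi(2) by (cases i) auto
  have edge: "edge_of t = \<sigma>" using ins by (simp add: edge_of_def)
  have e: "ser_nodes (Suc t) = ins_nodes t (ser_nodes t)" using ser_nodes_Suc_Ins[OF tl ins] .
  have "ser_nodes (Suc t) i = ser_nodes t i \<union> {Nd t i p | p. p \<in> ins_nodes t (ser_nodes t) i' \<and> join_ok (node_path p) (edge_of t)}"
    using e i' mi edge by simp
  moreover have "new_parents t i = {p \<in> ins_nodes t (ser_nodes t) i'. join_ok (node_path p) (edge_of t)}"
    using e i' by (simp add: new_parents_def)
  ultimately show ?thesis by auto
qed

lemma inserting_node_not_freed:
  assumes inv: "sys_inv c" and s: "thr c t = Some s" and top: "tops s = OInsert i # rest"
  shows "\<not> freed c (Nd t i p)"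
proof
  have it: "threads_inv c" and il: "locks_inv c" using inv by (auto simp: sys_inv_def)
  have oi: "OInsert i \<in> set (ops_of t)" using next_op_facts[OF it s top] by simp
  have ins: "txs ! t = Ins (edge_of t)" and i: "1 \<le> i" using OInsert_in_opsD[OF oi] by auto
  have rqi: "request_op t i Ex = OInsert i" using ins by (simp add: request_op_def)
  assume "freed c (Nd t i p)"
  then obtain X where X: "op_done c X OFree" "Nd t i p \<in> removed_upto X k" by (auto simp: freed_def)
  have dl: "Nd t i p \<in> removed_by X i" using removed_upto_depth[OF X(2)] by simp
  have tX: "t < X" using ser_nodes_nodeE[OF conjunct1[OF conjunct2[OF dl[unfolded removed_by_iff]]] i] by auto
  have g: "has_level (edge_of X) \<and> first_level (edge_of X) \<le> i \<and> i \<le> k"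
    using dl del_at_guard by (auto simp: removed_by_def)
  have Xd: "txs ! X = Del (edge_of X)" using OFree_in_opsD op_done_D[OF X(1)] by blast
  have od: "ODelete i \<in> set (ops_of X)" using ODelete_in_ops_iff[OF Xd] g by simp
  have rX: "request_op X i Ex = ODelete i" using Xd by (simp add: request_op_def)
  have "op_done c X (ODelete i)" using op_done_before[OF it X(1) od] g by simp
  then have "granted c i (X, Ex)" using rX by (simp add: granted_def)
  then have "op_done c t (request_op t i Ex)"
    using conflict_done_first[OF il tX, of i Ex Ex] oi rqi od rX op_done_D[OF X(1)] by simp
  then show False using next_op_not_done[OF it s top] rqi by simp
qed

lemma inserting_parent_created:
  assumes inv: "sys_inv c" and s: "thr c t = Some s" and top: "tops s = OInsert i # rest"
    and p: "p \<in> new_parents t i" and i2: "2 \<le> i"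
  shows "created c p"
proof -
  have it: "threads_inv c" and il: "locks_inv c" using inv by (auto simp: sys_inv_def)
  have oi: "OInsert i \<in> set (ops_of t)" using next_op_facts[OF it s top] by simp
  have ins: "txs ! t = Ins (edge_of t)" and mi: "matches (edge_of t) i" "i \<le> k"
    using OInsert_in_opsD[OF oi] by auto
  have pl: "p \<in> ser_nodes (Suc t) (i - 1)" using p by (simp add: new_parents_def)
  obtain t' q where tq: "p = Nd t' (i - 1) q" "t' < Suc t" "OInsert (i - 1) \<in> set (ops_of t')"
      "q \<in> new_parents t' (i - 1)"
    using ser_nodes_nodeE[OF pl] i2 by force
  have "op_done c t' (OInsert (i - 1))"
  proof (cases "t' = t")
    case True
    then show ?thesis using op_done_before_next[OF it s top] tq(3) i2 by simp
  next
    case False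
    then have tt: "t' < t" using tq(2) by simp
    have ro: "ORead (i - 1) \<in> set (ops_of t)" using ORead_in_ops_iff[OF ins] mi i2 by simp
    have "op_done c t (ORead (i - 1))" using op_done_before_next[OF it s top ro] i2 by simp
    then have g: "granted c (i - 1) (t, Sh)" by (simp add: granted_def request_op_Sh)
    have "txs ! t' = Ins (edge_of t')" using OInsert_in_opsD[OF tq(3)] by simp
    then have r': "request_op t' (i - 1) Ex = OInsert (i - 1)" by (simp add: request_op_def)
    show ?thesis
      using conflict_done_first[OF il tt, of "i - 1" Ex Sh] g r' tq(3) ro thr_launched[OF it s]
      by (simp add: request_op_Sh)
  qed
  then show ?thesis using tq by (auto simp: created_def)
qed

lemma insert_joins_new_parents:
  assumes inv: "sys_inv c" and s: "thr c t = Some s" and top: "tops s = OInsert i # rest"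
  shows "{(p, m). (p, Some m) \<in> (if i = 1 then {(Root, Some [])} else trd s) \<and> join_ok m (tedge s)}
    = {(p, node_path p) | p. p \<in> new_parents t i}"
proof -
  have it: "threads_inv c" and id: "data_inv c" using inv by (auto simp: sys_inv_def)
  have ins: "txs ! t = Ins (edge_of t)" using OInsert_in_opsD next_op_facts[OF it s top] by blast
  have "(if i = 1 then {(Root, Some [])} else trd s) = read_view t (i - 1)"
    using data_inv_thread[OF id s, unfolded thread_inv_Ins[OF ins]] top
    by (simp add: read_view_def ser_nodes_0)
  then show ?thesis using tedge_eq[OF it s] by (auto simp: read_view_def new_parents_def)
qed

lemma data_inv_insert:
  assumes inv: "sys_inv c" and s: "thr c t = Some s" and top: "tops s = OInsert i # rest" and h: "(t, Ex) \<in> hold c i"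
    and NW: "NW = {(p, m). (p, Some m) \<in> (if i = 1 then {(Root, Some [])} else trd s) \<and> join_ok m (tedge s)}"
    and TR: "TR = (\<lambda>n. case n of Nd t' i' p \<Rightarrow> (if t' = t \<and> i' = i \<and> (\<exists>m. (p, m) \<in> NW)
                              then Some \<lparr>ned = tedge s, npar = p\<rparr> else tree c n) | Root \<Rightarrow> tree c n)"
    and c': "c' = c\<lparr>tree := TR, lst := (lst c)(i := lst c i \<union> {Nd t i p | p m. (p, m) \<in> NW}), thr := (thr c)(t \<mapsto> s1), hold := H'\<rparr>"
    and s1: "s1 = s\<lparr>tops := rest, tadd := tadd s \<union> (if i = k then {m @ [tedge s] | p m. (p, m) \<in> NW} else {})\<rparr>"
  shows "data_inv c'"
proof -
  have it: "threads_inv c" and id: "data_inv c" using inv by (auto simp: sys_inv_def)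
  have oi: "OInsert i \<in> set (ops_of t)" using next_op_facts[OF it s top] by simp
  have ins: "txs ! t = Ins (edge_of t)" and mi: "matches (edge_of t) i" "1 \<le> i" "i \<le> k" using OInsert_in_opsD[OF oi] by auto
  have te: "tedge s = edge_of t" using tedge_eq[OF it s] .
  have tl: "t < nlaunch c" using thr_launched[OF it s] .
  have tlen: "t < length txs" using tl it by (auto simp: threads_inv_def)
  have nd: "\<not> op_done c t (OInsert i)" using next_op_not_done[OF it s top] .
  have tk: "thread_inv c t s" using data_inv_thread[OF id s] .
  have NWe: "NW = {(p, node_path p) | p. p \<in> new_parents t i}"
    using insert_joins_new_parents[OF inv s top] NW by simp
  have NW1: "(\<exists>m. (p, m) \<in> NW) \<longleftrightarrow> p \<in> new_parents t i" for p using NWe by auto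
  have NW2: "{Nd t i p | p m. (p, m) \<in> NW} = {Nd t i p | p. p \<in> new_parents t i}" using NWe by auto
  have NW3: "i = k \<Longrightarrow> {m @ [tedge s] | p m. (p, m) \<in> NW} = answers_added t" using NWe te by (auto simp: answers_added_def)
  have rqi: "request_op t i Ex = OInsert i" using ins by (simp add: request_op_def)
  have wv: "\<forall>t'. writes t' i \<longrightarrow> (write_done c t' i \<longleftrightarrow> t' < t)" using writer_sees_predecessors[OF inv s _ h] top rqi by simp
  have lstv: "lst c i = ser_nodes t i" using lst_eq_ser_nodes[OF id mi(2) wv] .
  have LSs: "ser_nodes (Suc t) i = ser_nodes t i \<union> {Nd t i p | p. p \<in> new_parents t i}" using ser_nodes_Suc_Ins_level[OF tlen ins oi] .
  have thr': "thr c' = (thr c)(t \<mapsto> s1)" using c' by simp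
  have du: "op_done c' t' x \<longleftrightarrow> op_done c t' x \<or> (t' = t \<and> x = OInsert i)" for t' x
    using op_done_step[OF it s top thr'] s1 c' by simp
  have wd: "write_done c' t' j \<longleftrightarrow> write_done c t' j \<or> (t' = t \<and> j = i)" for t' j using du by (auto simp: write_done_def)
  have cr: "created c' x \<longleftrightarrow> created c x \<or> (\<exists>p. x = Nd t i p \<and> p \<in> new_parents t i)" for x
    using du by (auto simp: created_def)
  have fr: "freed c' = freed c" using du by (auto simp: freed_def intro!: ext)
  have newnf: "\<not> freed c (Nd t i p)" for p using inserting_node_not_freed[OF inv s top] .
  show ?thesis
  proof (rule data_inv_stepI[OF id thr'])
    show "\<And>t' x. t' \<noteq> t \<Longrightarrow> op_done c' t' x = op_done c t' x" using du by simp
  next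
    fix j :: nat assume "1 \<le> j"
    then show "\<exists>N \<le> nlaunch c'. lst c' j = ser_nodes N j \<and> (\<forall>t. writes t j \<longrightarrow> (t < N \<longleftrightarrow> write_done c' t j))"
      by (rule lst_after_write[OF id _ wd wv]) (use c' NW2 lstv LSs tl in simp_all)
  next
    fix n show "tree c' n = (if created c' n \<and> \<not> freed c' n then Some (node_record n) else None)"
    proof (cases n)
      case Root
      have "\<not> created c Root" by (simp add: created_def)
      then show ?thesis using data_inv_tree[OF id, of n] c' TR Root cr by simp
    next
      case (Nd t0 i0 p0)
      show ?thesis
      proof (cases "t0 = t \<and> i0 = i \<and> p0 \<in> new_parents t i")
        case True
        have "TR n = Some (node_record n)" using TR Nd True NW1 te by (simp add: node_record_def)
        then show ?thesis using c' True Nd cr fr newnf by simp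
      next
        case False
        have "TR n = tree c n" using TR Nd False NW1 by auto
        moreover have "created c' n = created c n" using cr Nd False by auto
        ultimately show ?thesis using data_inv_tree[OF id, of n] c' fr by simp
      qed
    qed
  next
    fix t0 i0 p0 assume cp: "created c' (Nd t0 i0 p0)" and i2: "2 \<le> i0"
    show "created c' p0"
    proof (cases "created c (Nd t0 i0 p0)")
      case True then show ?thesis using data_inv_parent_created[OF id True i2] cr by simp
    next
      case False
      then have "t0 = t" "i0 = i" "p0 \<in> new_parents t i" using cp cr by auto
      then show ?thesis using inserting_parent_created[OF inv s top] i2 cr by simp
    qed
  next
    have tk': "tE s = {} \<and> trem s = {} \<and> tadd s = (if op_done c t (OInsert k) then answers_added t else {})"
      using tk[unfolded thread_inv_Ins[OF ins]] by simp
    have ni: "\<forall>i' rest'. rest = OInsert i' # rest' \<longrightarrow> i' \<noteq> 1 \<longrightarrow> False"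
      using no_consecutive_inserts[OF it s] top by blast
    have dk: "op_done c' t (OInsert k) \<longleftrightarrow> op_done c t (OInsert k) \<or> i = k" using du by auto
    have "tadd s1 = (if op_done c' t (OInsert k) then answers_added t else {})"
      using s1 tk' dk NW3 nd by auto
    then show "thread_inv c' t s1" unfolding thread_inv_Ins[OF ins] using tk' s1 ni by auto
  qed
qed

lemma deleter_sees_live_ancestors:
  assumes inv: "sys_inv c" and s: "thr c t = Some s" and top: "tops s = ODelete j # rest" and h: "(t, Ex) \<in> hold c j"
    and x: "x \<in> ser_nodes t j"
  shows "\<forall>a\<in>ancestors x. tree c a = Some (node_record a)"
proof -
  have it: "threads_inv c" and il: "locks_inv c" using inv by (auto simp: sys_inv_def)
  have od: "ODelete j \<in> set (ops_of t)" using next_op_facts[OF it s top] by simp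
  have del: "txs ! t = Del (edge_of t)" and g: "has_level (edge_of t)" "first_level (edge_of t) \<le> j"
    using ODelete_in_opsD[OF od] by auto
  have j1: "1 \<le> j" using first_level_spec[OF g(1)] g(2) by simp
  have nd: "\<not> op_done c t (ODelete j)" using next_op_not_done[OF it s top] .
  have rqd: "request_op t j Ex = ODelete j" using del by (simp add: request_op_def)
  have wv: "\<forall>t'. writes t' j \<longrightarrow> (write_done c t' j \<longleftrightarrow> t' < t)"
    using writer_sees_predecessors[OF inv s _ h] top rqd by simp
  show ?thesis
  proof (rule ancestors_present[OF inv x j1])
    show "\<forall>t'. writes t' j \<longrightarrow> t' < t \<longrightarrow> write_done c t' j" using wv by blast
    show "\<forall>X. t \<le> X \<longrightarrow> ODelete j \<in> set (ops_of X) \<longrightarrow> \<not> op_done c X (ODelete j)"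
    proof (intro allI impI notI)
      fix X assume X: "t \<le> X" "ODelete j \<in> set (ops_of X)" "op_done c X (ODelete j)"
      show False
      proof (cases "X = t")
        case True then show False using nd X by simp
      next
        case False
        then have tX: "t < X" using X by simp
        have "txs ! X = Del (edge_of X)" using ODelete_in_opsD[OF X(2)] by simp
        then have rX: "request_op X j Ex = ODelete j" by (simp add: request_op_def)
        have "granted c j (X, Ex)" using X(3) rX by (simp add: granted_def)
        then have "op_done c t (request_op t j Ex)"
          using conflict_done_first[OF il tX, of j Ex Ex] X od rX rqd op_done_D[OF X(3)] by simp
        then show False using nd rqd by simp
      qed
    qed
  qed
qed

lemma partially_removed_before:
  assumes inv: "sys_inv c" and s: "thr c t = Some s" and top: "tops s = ODelete j # rest"
  shows "tE s = removed_upto t (j - 1)"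
proof -
  have it: "threads_inv c" and id: "data_inv c" using inv by (auto simp: sys_inv_def)
  have od: "ODelete j \<in> set (ops_of t)" using next_op_facts[OF it s top] by simp
  have del: "txs ! t = Del (edge_of t)" and g: "has_level (edge_of t)" "first_level (edge_of t) \<le> j"
    using ODelete_in_opsD[OF od] by auto
  have j1: "1 \<le> j" using first_level_spec[OF g(1)] g(2) by simp
  have tk: "thread_inv c t s" using data_inv_thread[OF id s] .
  have "tE s = \<Union>{removed_by t l | l. op_done c t (ODelete l)}" using tk[unfolded thread_inv_Del[OF del]] by simp
  also have "\<dots> = \<Union>{removed_by t l | l. ODelete l \<in> set (ops_of t) \<and> l < j}"
    using deletes_done_before[OF it s top] by simp
  also have "\<dots> = \<Union>{removed_by t l | l. ODelete l \<in> set (ops_of t) \<and> l \<le> j - 1}"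
  proof -
    have "ODelete l \<in> set (ops_of t) \<Longrightarrow> (l < j \<longleftrightarrow> l \<le> j - 1)" for l using j1 by auto
    then show ?thesis by metis
  qed
  also have "\<dots> = removed_upto t (j - 1)" using removed_upto_ops[OF del] by simp
  finally show ?thesis .
qed

lemma delete_selects_removed_by:
  assumes inv: "sys_inv c" and s: "thr c t = Some s" and top: "tops s = ODelete j # rest" and h: "(t, Ex) \<in> hold c j"
  shows "{n \<in> lst c j. case tree c n of None \<Rightarrow> False | Some nd \<Rightarrow> ned nd = tedge s \<or> npar nd \<in> tE s}
    = removed_by t j" (is "?R = _")
proof -
  have it: "threads_inv c" and id: "data_inv c" using inv by (auto simp: sys_inv_def)
  have od: "ODelete j \<in> set (ops_of t)" using next_op_facts[OF it s top] by simp
  have del: "txs ! t = Del (edge_of t)" and g: "has_level (edge_of t)" "first_level (edge_of t) \<le> j" "j \<le> k"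
    using ODelete_in_opsD[OF od] by auto
  have j1: "1 \<le> j" using first_level_spec[OF g(1)] g(2) by simp
  have "request_op t j Ex = ODelete j" using del by (simp add: request_op_def)
  then have "\<forall>t'. writes t' j \<longrightarrow> (write_done c t' j \<longleftrightarrow> t' < t)"
    using writer_sees_predecessors[OF inv s _ h] top by simp
  then have lstv: "lst c j = ser_nodes t j" using lst_eq_ser_nodes[OF id j1] by blast
  have "tree c n = Some (node_record n)" if "n \<in> ser_nodes t j" for n
    using deleter_sees_live_ancestors[OF inv s top h that] ser_nodes_nodeE[OF that j1] by auto
  then have "?R = {n \<in> ser_nodes t j. node_edge n = edge_of t \<or> node_parent n \<in> removed_upto t (j - 1)}"
    unfolding lstv tedge_eq[OF it s] partially_removed_before[OF inv s top]
    by (auto simp: node_record_def)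
  also have "\<dots> = removed_by t j" using g by (simp add: removed_by_def del_at_def del_step_def removed_upto_def)
  finally show ?thesis .
qed

lemma data_inv_delete:
  assumes inv: "sys_inv c" and s: "thr c t = Some s" and top: "tops s = ODelete j # rest" and h: "(t, Ex) \<in> hold c j"
    and R: "R = {n \<in> lst c j. case tree c n of None \<Rightarrow> False | Some nd \<Rightarrow> ned nd = tedge s \<or> npar nd \<in> tE s}"
    and c': "c' = c\<lparr>lst := (lst c)(j := lst c j - R), thr := (thr c)(t \<mapsto> s1), hold := H'\<rparr>"
    and s1: "s1 = s\<lparr>tops := rest, tE := tE s \<union> R, trem := trem s \<union> (if j = k then bt k (tree c) ` R else {})\<rparr>"
  shows "data_inv c'"
proof -
  have it: "threads_inv c" and id: "data_inv c" using inv by (auto simp: sys_inv_def)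
  have od: "ODelete j \<in> set (ops_of t)" using next_op_facts[OF it s top] by simp
  have del: "txs ! t = Del (edge_of t)" and g: "has_level (edge_of t)" "first_level (edge_of t) \<le> j" "j \<le> k" using ODelete_in_opsD[OF od] by auto
  have j1: "1 \<le> j" using first_level_spec[OF g(1)] g(2) by simp
  have tl: "t < nlaunch c" using thr_launched[OF it s] .
  have tlen: "t < length txs" using tl it by (auto simp: threads_inv_def)
  have nd: "\<not> op_done c t (ODelete j)" using next_op_not_done[OF it s top] .
  have tk: "thread_inv c t s" using data_inv_thread[OF id s] .
  have rqd: "request_op t j Ex = ODelete j" using del by (simp add: request_op_def)
  have wv: "\<forall>t'. writes t' j \<longrightarrow> (write_done c t' j \<longleftrightarrow> t' < t)" using writer_sees_predecessors[OF inv s _ h] top rqd by simp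
  have lstv: "lst c j = ser_nodes t j" using lst_eq_ser_nodes[OF id j1 wv] .
  have prs: "\<forall>a\<in>ancestors x. tree c a = Some (node_record a)" if "x \<in> ser_nodes t j" for x
    using deleter_sees_live_ancestors[OF inv s top h that] .
  have Req: "R = removed_by t j" using delete_selects_removed_by[OF inv s top h] R by simp
  have LSs: "ser_nodes (Suc t) j = ser_nodes t j - removed_by t j" using ser_nodes_Suc_Del[OF tlen del] by simp
  have thr': "thr c' = (thr c)(t \<mapsto> s1)" using c' by simp
  have du: "op_done c' t' x \<longleftrightarrow> op_done c t' x \<or> (t' = t \<and> x = ODelete j)" for t' x
    using op_done_step[OF it s top thr'] s1 c' by simp
  have wd: "write_done c' t' j' \<longleftrightarrow> write_done c t' j' \<or> (t' = t \<and> j' = j)" for t' j' using du by (auto simp: write_done_def)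
  have cr: "created c' = created c" using du by (auto simp: created_def intro!: ext)
  have fr: "freed c' = freed c" using du by (auto simp: freed_def intro!: ext)
  show ?thesis
  proof (rule data_inv_stepI[OF id thr'])
    show "\<And>t' x. t' \<noteq> t \<Longrightarrow> op_done c' t' x = op_done c t' x" using du by simp
  next
    fix j' :: nat assume "1 \<le> j'"
    then show "\<exists>N \<le> nlaunch c'. lst c' j' = ser_nodes N j' \<and> (\<forall>t. writes t j' \<longrightarrow> (t < N \<longleftrightarrow> write_done c' t j'))"
      by (rule lst_after_write[OF id _ wd wv]) (use c' lstv LSs Req tl in simp_all)
  next
    fix n show "tree c' n = (if created c' n \<and> \<not> freed c' n then Some (node_record n) else None)"
      using data_inv_tree[OF id] c' cr fr by simp
  next
    fix t0 i p assume "created c' (Nd t0 i p)" "2 \<le> i"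
    then show "created c' p" using data_inv_parent_created[OF id] cr by simp
  next
    have tk': "tadd s = {} \<and> tE s = \<Union>{removed_by t l | l. op_done c t (ODelete l)}
        \<and> trem s = (if op_done c t (ODelete k) then Some ` node_path ` removed_by t k else {})"
      using tk[unfolded thread_inv_Del[OF del]] by simp
    have e1: "tE s1 = \<Union>{removed_by t l | l. op_done c' t (ODelete l)}"
    proof -
      have "{removed_by t l | l. op_done c' t (ODelete l)} = insert (removed_by t j) {removed_by t l | l. op_done c t (ODelete l)}"
        using du by auto
      then show ?thesis using s1 tk' Req by auto
    qed
    have e2: "trem s1 = (if op_done c' t (ODelete k) then Some ` node_path ` removed_by t k else {})"
    proof (cases "j = k")
      case True
      have bt: "bt k (tree c) ` removed_by t k = Some ` node_path ` removed_by t k"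
      proof -
        have "\<And>n. n \<in> removed_by t k \<Longrightarrow> bt k (tree c) n = Some (node_path n)"
          using prs bt_eq_node_path removed_by_iff True by blast
        then show ?thesis by (auto simp: image_iff)
      qed
      have "trem s = {}" using tk' nd True by simp
      then show ?thesis using s1 True du bt Req by simp
    next
      case False
      then show ?thesis using s1 tk' du by simp
    qed
    show "thread_inv c' t s1" unfolding thread_inv_Del[OF del] using e1 e2 tk' s1 by simp
  qed
qed

lemma data_inv_free:
  assumes inv: "sys_inv c" and s: "thr c t = Some s" and top: "tops s = OFree # rest"
    and c': "c' = c\<lparr>tree := (\<lambda>n. if n \<in> tE s then None else tree c n), thr := (thr c)(t \<mapsto> s\<lparr>tops := rest\<rparr>)\<rparr>"
  shows "data_inv c'"
proof -
  have it: "threads_inv c" and id: "data_inv c" using inv by (auto simp: sys_inv_def)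
  have ofr: "OFree \<in> set (ops_of t)" using next_op_facts[OF it s top] by simp
  have del: "txs ! t = Del (edge_of t)" using OFree_in_opsD[OF ofr] by simp
  have tk: "thread_inv c t s" using data_inv_thread[OF id s] .
  have tEs: "tE s = removed_upto t k"
  proof -
    have "tE s = \<Union>{removed_by t l | l. op_done c t (ODelete l)}" using tk[unfolded thread_inv_Del[OF del]] by simp
    also have "\<dots> = \<Union>{removed_by t l | l. ODelete l \<in> set (ops_of t) \<and> l \<le> k}"
    proof -
      have "op_done c t (ODelete l) \<longleftrightarrow> ODelete l \<in> set (ops_of t) \<and> l \<le> k" for l
      proof
        assume "op_done c t (ODelete l)"
        then show "ODelete l \<in> set (ops_of t) \<and> l \<le> k" using op_done_D ODelete_in_opsD by blast
      next
        assume "ODelete l \<in> set (ops_of t) \<and> l \<le> k"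
        then show "op_done c t (ODelete l)" using op_done_before_next[OF it s top] by simp
      qed
      then show ?thesis by simp
    qed
    also have "\<dots> = removed_upto t k" using removed_upto_ops[OF del] by simp
    finally show ?thesis .
  qed
  have thr': "thr c' = (thr c)(t \<mapsto> s\<lparr>tops := rest\<rparr>)" using c' by simp
  have du: "op_done c' t' x \<longleftrightarrow> op_done c t' x \<or> (t' = t \<and> x = OFree)" for t' x
    using op_done_step[OF it s top thr'] c' by simp
  have wd: "write_done c' = write_done c" using du by (auto simp: write_done_def intro!: ext)
  have cr: "created c' = created c" using du by (auto simp: created_def intro!: ext)
  have fr: "freed c' x \<longleftrightarrow> freed c x \<or> x \<in> removed_upto t k" for x using du by (auto simp: freed_def)
  show ?thesis
  proof (rule data_inv_stepI[OF id thr'])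
    show "\<And>t' x. t' \<noteq> t \<Longrightarrow> op_done c' t' x = op_done c t' x" using du by simp
  next
    fix j :: nat assume "1 \<le> j"
    then show "\<exists>N \<le> nlaunch c'. lst c' j = ser_nodes N j \<and> (\<forall>t. writes t j \<longrightarrow> (t < N \<longleftrightarrow> write_done c' t j))"
      using data_inv_lst[OF id] c' wd by simp
  next
    fix n show "tree c' n = (if created c' n \<and> \<not> freed c' n then Some (node_record n) else None)"
      using data_inv_tree[OF id, of n] c' cr fr tEs by simp
  next
    fix t0 i p assume "created c' (Nd t0 i p)" "2 \<le> i"
    then show "created c' p" using data_inv_parent_created[OF id] cr by simp
  next
    have "\<And>l. op_done c' t (ODelete l) = op_done c t (ODelete l)" using du by simp
    then show "thread_inv c' t (s\<lparr>tops := rest\<rparr>)"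
      using tk unfolding thread_inv_Del[OF del] by simp
  qed
qed

lemma sys_inv_exec:
  assumes inv: "sys_inv c" and s: "thr c t = Some s" and top: "tops s = op # rest"
    and lk: "op_lock op = Some (j, m)" and h: "(t, m) \<in> hold c j"
  shows "sys_inv ((do_op k join_ok t s c)\<lparr>hold := (hold c)(j := hold c j - {(t, m)})\<rparr>)"
    (is "sys_inv ?c'")
proof -
  have it: "threads_inv c" and il: "locks_inv c" using inv by (auto simp: sys_inv_def)
  have oin: "op \<in> set (ops_of t)" using next_op_facts[OF it s top] by simp
  have opr: "op = request_op t j m" using op_lock_eq_request_op[OF oin, of j m] lk by simp
  have cond: "(op = request_op t j m \<and> (t, m) \<in> hold c j) \<or> op = OFree" using opr h by simp
  have hc: "hold ?c' = (hold c)(j := hold c j - {(t, m)})" by simp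
  show ?thesis
  proof (cases op)
    case (ORead l)
    have jm: "j = l" "m = Sh" using lk ORead by auto
    define s1 where "s1 = s\<lparr>tops := rest, trd := {(n, bt l (tree c) n) | n. n \<in> lst c l}\<rparr>"
    have c': "?c' = c\<lparr>thr := (thr c)(t \<mapsto> s1), hold := (hold c)(j := hold c j - {(t, m)})\<rparr>"
      using do_op_read[of s l rest t c] top ORead s1_def by simp
    have thr': "thr ?c' = (thr c)(t \<mapsto> s1)" using c' by simp
    have "threads_inv ?c'" using threads_inv_step[OF it s top thr'] c' s1_def by simp
    moreover have "locks_inv ?c'" using locks_inv_step[OF it il s top thr' _ _ _ hc cond] c' s1_def by simp
    moreover have "data_inv ?c'" using data_inv_read[OF inv s _ _ c' s1_def] top ORead h jm by simp
    ultimately show ?thesis by (simp add: sys_inv_def)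
  next
    case (OInsert i)
    have jm: "j = i" "m = Ex" using lk OInsert by auto
    define NW where "NW = {(p, m). (p, Some m) \<in> (if i = 1 then {(Root, Some [])} else trd s) \<and> join_ok m (tedge s)}"
    define TR where "TR = (\<lambda>n. case n of Nd t' i' p \<Rightarrow> (if t' = t \<and> i' = i \<and> (\<exists>m. (p, m) \<in> NW)
                              then Some \<lparr>ned = tedge s, npar = p\<rparr> else tree c n) | Root \<Rightarrow> tree c n)"
    define s1 where "s1 = s\<lparr>tops := rest, tadd := tadd s \<union> (if i = k then {m @ [tedge s] | p m. (p, m) \<in> NW} else {})\<rparr>"
    have c': "?c' = c\<lparr>tree := TR, lst := (lst c)(i := lst c i \<union> {Nd t i p | p m. (p, m) \<in> NW}), thr := (thr c)(t \<mapsto> s1),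
                hold := (hold c)(j := hold c j - {(t, m)})\<rparr>"
      using do_op_insert[of s i rest NW t c, OF _ NW_def] top OInsert unfolding TR_def s1_def by simp
    have thr': "thr ?c' = (thr c)(t \<mapsto> s1)" using c' by simp
    have "threads_inv ?c'" using threads_inv_step[OF it s top thr'] c' s1_def by simp
    moreover have "locks_inv ?c'" using locks_inv_step[OF it il s top thr' _ _ _ hc cond] c' s1_def by simp
    moreover have "data_inv ?c'" using data_inv_insert[OF inv s _ _ NW_def TR_def c' s1_def] top OInsert h jm by simp
    ultimately show ?thesis by (simp add: sys_inv_def)
  next
    case (ODelete j')
    have jm: "j = j'" "m = Ex" using lk ODelete by auto
    define R where "R = {n \<in> lst c j'. case tree c n of None \<Rightarrow> False | Some nd \<Rightarrow> ned nd = tedge s \<or> npar nd \<in> tE s}"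
    define s1 where "s1 = s\<lparr>tops := rest, tE := tE s \<union> R, trem := trem s \<union> (if j' = k then bt k (tree c) ` R else {})\<rparr>"
    have c': "?c' = c\<lparr>lst := (lst c)(j' := lst c j' - R), thr := (thr c)(t \<mapsto> s1), hold := (hold c)(j := hold c j - {(t, m)})\<rparr>"
      using do_op_delete[of s j' rest R c t, OF _ R_def] top ODelete unfolding s1_def by simp
    have thr': "thr ?c' = (thr c)(t \<mapsto> s1)" using c' by simp
    have "threads_inv ?c'" using threads_inv_step[OF it s top thr'] c' s1_def by simp
    moreover have "locks_inv ?c'" using locks_inv_step[OF it il s top thr' _ _ _ hc cond] c' s1_def by simp
    moreover have "data_inv ?c'" using data_inv_delete[OF inv s _ _ R_def c' s1_def] top ODelete h jm by simp
    ultimately show ?thesis by (simp add: sys_inv_def)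
  next
    case OFree
    then show ?thesis using lk by simp
  qed
qed

lemma sys_inv_free:
  assumes inv: "sys_inv c" and s: "thr c t = Some s" and top: "tops s = OFree # rest"
  shows "sys_inv (do_op k join_ok t s c)" (is "sys_inv ?c'")
proof -
  have it: "threads_inv c" and il: "locks_inv c" using inv by (auto simp: sys_inv_def)
  have c': "?c' = c\<lparr>tree := (\<lambda>n. if n \<in> tE s then None else tree c n), thr := (thr c)(t \<mapsto> s\<lparr>tops := rest\<rparr>)\<rparr>"
    using do_op_free[OF top] .
  have thr': "thr ?c' = (thr c)(t \<mapsto> s\<lparr>tops := rest\<rparr>)" using c' by simp
  have nh: "(t, Sh) \<notin> hold c 0"
  proof
    assume "(t, Sh) \<in> hold c 0"
    then obtain s2 r2 where "thr c t = Some s2" "tops s2 = request_op t 0 Sh # r2" using holder_next_op[OF il] by blast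
    then show False using s top request_op_ne_OFree by simp
  qed
  have hc: "hold ?c' = (hold c)(0 := hold c 0 - {(t, Sh)})" using c' nh by auto
  have "threads_inv ?c'" using threads_inv_step[OF it s top thr'] c' by simp
  moreover have "locks_inv ?c'" using locks_inv_step[OF it il s top thr' _ _ _ hc] c' by simp
  moreover have "data_inv ?c'" using data_inv_free[OF inv s top c'] .
  ultimately show ?thesis by (simp add: sys_inv_def)
qed

lemma sys_inv_step: "cstep k matches join_ok txs c c' \<Longrightarrow> sys_inv c \<Longrightarrow> sys_inv c'"
proof (induction rule: cstep.cases)
  case (launch c ops reqs)
  then show ?case
    using sys_inv_launched[of c] by (simp add: launched_def requests_of_def ops_of_def edge_of_def)
next
  case (grant c t s op rest j m w)
  then show ?case using sys_inv_granting[of c t s op rest j m w] by (simp add: granting_def)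
next
  case (exec c t s op rest j m)
  then show ?case using sys_inv_exec[of c t s op rest j m] by simp
next
  case (free c t s rest)
  then show ?case using sys_inv_free[of c t s rest] by simp
qed

lemma sys_inv_reachable: "(cstep k matches join_ok txs)\<^sup>*\<^sup>* conf_init c \<Longrightarrow> sys_inv c"
proof (induction rule: rtranclp_induct)
  case base then show ?case by (rule sys_inv_init)
next
  case (step b c) then show ?case using sys_inv_step by blast
qed

section \<open>Streaming consistency\<close>

lemma answers_step:
  assumes inv: "sys_inv c" and tlen: "t < length txs" and dn: "txn_done c t" and kp: "0 < k"
  shows "(case thr c t of None \<Rightarrow> Some ` node_path ` ser_nodes t k | Some s \<Rightarrow> (Some ` node_path ` ser_nodes t k - trem s) \<union> Some ` tadd s)
         = Some ` node_path ` ser_nodes (Suc t) k"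
proof -
  have it: "threads_inv c" and id: "data_inv c" using inv by (auto simp: sys_inv_def)
  obtain s where s: "thr c t = Some s" "tops s = []" using dn by (auto simp: txn_done_def)
  have dp: "op_done c t x \<longleftrightarrow> x \<in> set (ops_of t)" for x using op_done_iff[OF it s(1)] s(2) by simp
  have tk: "thread_inv c t s" using data_inv_thread[OF id s(1)] .
  show ?thesis
  proof (cases "txs ! t")
    case (Ins \<sigma>)
    have edge: "edge_of t = \<sigma>" using Ins by (simp add: edge_of_def)
    have t1: "trem s = {}" "tadd s = (if OInsert k \<in> set (ops_of t) then answers_added t else {})"
      using tk[unfolded thread_inv_Ins[OF Ins]] dp by auto
    show ?thesis
    proof (cases "OInsert k \<in> set (ops_of t)")
      case True
      have LSs: "ser_nodes (Suc t) k = ser_nodes t k \<union> {Nd t k p | p. p \<in> new_parents t k}" using ser_nodes_Suc_Ins_level[OF tlen Ins True] .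
      have e1: "{Nd t k p | p. p \<in> new_parents t k} = Nd t k ` new_parents t k" by auto
      have e2: "answers_added t = (\<lambda>p. node_path p @ [edge_of t]) ` new_parents t k" by (auto simp: answers_added_def)
      have "node_path ` {Nd t k p | p. p \<in> new_parents t k} = answers_added t" unfolding e1 e2 image_image by simp
      then have "Some ` node_path ` ser_nodes (Suc t) k = Some ` node_path ` ser_nodes t k \<union> Some ` answers_added t"
        unfolding LSs by (simp add: image_Un)
      then show ?thesis using s t1 True by simp
    next
      case False
      have "ser_nodes (Suc t) k = ser_nodes t k"
      proof -
        have "\<not> writes t k" using False Ins by (auto simp: writes_def ops_of_def mem_ins_ops)
        then show ?thesis using ser_nodes_Suc_nonwriter kp by simp
      qed
      then show ?thesis using s t1 False by simp
    qed
  next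
    case (Del \<sigma>)
    have edge: "edge_of t = \<sigma>" using Del by (simp add: edge_of_def)
    have t1: "tadd s = {}" "trem s = (if ODelete k \<in> set (ops_of t) then Some ` node_path ` removed_by t k else {})"
      using tk[unfolded thread_inv_Del[OF Del]] dp by auto
    have "trem s = Some ` node_path ` removed_by t k"
    proof (cases "ODelete k \<in> set (ops_of t)")
      case True then show ?thesis using t1 by simp
    next
      case False
      then have "\<not> has_level \<sigma>" using ODelete_in_ops_iff[OF Del] first_level_spec by fastforce
      then have "removed_by t k = {}" using del_at_guard edge by (auto simp: removed_by_def)
      then show ?thesis using t1 by simp
    qed
    moreover have LSs: "ser_nodes (Suc t) k = ser_nodes t k - removed_by t k" using ser_nodes_Suc_Del[OF tlen Del] by simp
    moreover have "Some ` node_path ` ser_nodes t k - Some ` node_path ` removed_by t k = Some ` node_path ` (ser_nodes t k - removed_by t k)"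
    proof -
      have "\<And>x y. x \<in> ser_nodes t k \<Longrightarrow> y \<in> removed_by t k \<Longrightarrow> node_path x = node_path y \<Longrightarrow> x \<in> removed_by t k"
        using removed_by_iff by metis
      then show ?thesis by (auto simp: image_iff) blast
    qed
    ultimately show ?thesis using s t1 by simp
  qed
qed

lemma streaming_consistent_if_sys_inv:
  assumes inv: "sys_inv c" and kp: "0 < k"
  shows "streaming_consistent k matches join_ok txs c"
  unfolding streaming_consistent_def
proof (intro allI impI)
  fix t assume tl: "t \<le> length txs" and dn: "\<forall>i<t. txn_done c i"
  have "conc_answers c t = Some ` node_path ` ser_nodes t k"
    using tl dn
  proof (induction t)
    case 0 then show ?case using kp by (simp add: conc_answers_def)
  next
    case (Suc t)
    have IH: "conc_answers c t = Some ` node_path ` ser_nodes t k" using Suc by simp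
    have "conc_answers c (Suc t) = (case thr c t of None \<Rightarrow> conc_answers c t
            | Some s \<Rightarrow> (conc_answers c t - trem s) \<union> Some ` tadd s)"
      unfolding conc_answers_def by simp
    also have "\<dots> = Some ` node_path ` ser_nodes (Suc t) k"
      unfolding IH using Suc.prems by (intro answers_step[OF inv _ _ kp]) simp_all
    finally show ?case .
  qed
  then show "conc_answers c t = Some ` ser_L k matches join_ok txs t k"
    by (simp add: ser_L_eq_paths)
qed

end

theorem theorem6:
  fixes k :: nat and matches :: "'e \<Rightarrow> nat \<Rightarrow> bool" and join_ok :: "'e list \<Rightarrow> 'e \<Rightarrow> bool"
    and txs :: "'e txn list" and c :: "'e conf"
  assumes "0 < k"
    and "(cstep k matches join_ok txs)\<^sup>*\<^sup>* conf_init c"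
  shows "streaming_consistent k matches join_ok txs c"
proof -
  interpret ms_tree_system k matches join_ok txs .
  show ?thesis using streaming_consistent_if_sys_inv[OF sys_inv_reachable[OF assms(2)] assms(1)] .
qed

end
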